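(* Let $\rho$ be a Drinfeld $\mathbb{F}_q[t]$-module of rank $r$ defined over $\overline{k}$ with $\rho_t=\theta+\kappa_1\tau+\cdots+\kappa_{r-1}\tau^{r-1}+\tau^r$, and let $E=(E_{ij})\in\mathrm{Mat}_r(\overline{k}(t))$ satisfy $\Phi_\rho E=E^{(-1)}\Phi_\rho$ (i.e., $\mathbf{m}\mapsto E\mathbf{m}$ is an endomorphism of $M_\rho$). Then: (a) each $E_{ij}$ is regular at $t=\theta,\theta^q,\theta^{q^2},\ldots$; (b) $E_{21}(\theta)=\cdots=E_{r1}(\theta)=0$; (c) $E_{11}(\theta)\in K_\rho$.
   Context: $\mathbb{F}_q$ is the field with $q$ elements, $\theta,t$ independent variables, $A=\mathbb{F}_q[\theta]$, $k=\mathbb{F}_q(\theta)$, $\mathbb{C}_\infty$ the completion of an algebraic closure of $\mathbb{F}_q((1/\theta))$, $\overline{k}$ the algebraic closure of $k$ in $\mathbb{C}_\infty$. For $f=\sum a_it^i\in\mathbb{C}_\infty((t))$, $f^{(n)}=\sum a_i^{q^n}t^i$ (entrywise on matrices; $c^{(n)}=c^{q^n}$ on constants). $\tau$ is the $q$-power Frobenius, $\mathbb{C}_\infty[\tau]$ the twisted polynomial ring acting by $(\sum c_i\tau^i)(x)=\sum c_ix^{q^i}$; $\rho$ is the $\mathbb{F}_q$-algebra map $\mathbb{F}_q[t]\to\overline{k}[\tau]$ determined by $\rho_t$ ($\kappa_i\in\overline{k}$). $\exp_\rho$ is the unique entire $\mathbb{F}_q$-linear series $z+\sum_{i\ge1}\alpha_iz^{q^i}$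 with $\exp_\rho(\theta z)=\rho_t(\exp_\rho(z))$; $\Lambda_\rho=\ker\exp_\rho$ is a free $A$-module of rank $r$; $\mathrm{End}(\rho)=\{c\in\mathbb{C}_\infty:c\Lambda_\rho\subseteq\Lambda_\rho\}$ and $K_\rho$ is its fraction field. $\Phi_\rho\in\mathrm{Mat}_r(\overline{k}[t])$ has entries $1$ at $(i,i+1)$ for $1\le i\le r-1$, last row $(t-\theta,-\kappa_1^{(-1)},\dots,-\kappa_{r-1}^{(-(r-1))})$, zeros elsewhere. $M_\rho$ is $\overline{k}(t)^r$ with basis $\mathbf{m}=(m_1,\dots,m_r)^{\mathrm{tr}}$ as a left module over the twisted ring $\overline{k}(t)[\sigma,\sigma^{-1}]$ ($\sigma f=f^{(-1)}\sigma$) with $\sigma\mathbf{m}=\Phi_\rho\mathbf{m}$. *)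

theory Defs
  imports "HOL-Computational_Algebra.Polynomial" "HOL-Computational_Algebra.Fraction_Field"
          "Jordan_Normal_Form.Matrix"
begin

definition nonarch_abs :: "('a::field \<Rightarrow> real) \<Rightarrow> bool" where
  "nonarch_abs av \<longleftrightarrow> av 0 = 0 \<and> (\<forall>x. x \<noteq> 0 \<longrightarrow> av x > 0)
     \<and> (\<forall>x y. av (x * y) = av x * av y) \<and> (\<forall>x y. av (x + y) \<le> max (av x) (av y))"

definition conv_to :: "('a::field \<Rightarrow> real) \<Rightarrow> (nat \<Rightarrow> 'a) \<Rightarrow> 'a \<Rightarrow> bool" where
  "conv_to av s L \<longleftrightarrow> (\<forall>e>0. \<exists>N. \<forall>n\<ge>N. av (s n - L) < e)"

definition av_cauchy :: "('a::field \<Rightarrow> real) \<Rightarrow> (nat \<Rightarrow> 'a) \<Rightarrow> bool" where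
  "av_cauchy av s \<longleftrightarrow> (\<forall>e>0. \<exists>N. \<forall>m\<ge>N. \<forall>n\<ge>N. av (s m - s n) < e)"

definition av_complete :: "('a::field \<Rightarrow> real) \<Rightarrow> bool" where
  "av_complete av \<longleftrightarrow> (\<forall>s. av_cauchy av s \<longrightarrow> (\<exists>L. conv_to av s L))"

definition alg_closed :: "'a::field itself \<Rightarrow> bool" where
  "alg_closed _ \<longleftrightarrow> (\<forall>p::'a poly. degree p > 0 \<longrightarrow> (\<exists>x. poly p x = 0))"

definition Fq :: "nat \<Rightarrow> 'a::field set" where
  "Fq q = {x. x ^ q = x}"

text \<open>k = F_q(theta) inside the ambient field.\<close>
definition kset :: "nat \<Rightarrow> 'a::field \<Rightarrow> 'a set" where
  "kset q \<theta> = {poly a \<theta> / poly b \<theta> | a b. set (coeffs a) \<subseteq> Fq q \<and> set (coeffs b) \<subseteq> Fq q \<and> b \<noteq> 0}"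

definition kbar :: "nat \<Rightarrow> 'a::field \<Rightarrow> 'a set" where
  "kbar q \<theta> = {x. \<exists>p. p \<noteq> 0 \<and> set (coeffs p) \<subseteq> kset q \<theta> \<and> poly p x = 0}"

text \<open>The ambient field C with absolute value av is (a copy of) C_infinity:
  a complete, algebraically closed field of characteristic p (q = p^e), with a
  non-archimedean absolute value with |theta| > 1, in which kbar is dense.\<close>
definition is_C_infty :: "('a::field \<Rightarrow> real) \<Rightarrow> nat \<Rightarrow> 'a \<Rightarrow> bool" where
  "is_C_infty av q \<theta> \<longleftrightarrow>
     (\<exists>p e. prime p \<and> e \<ge> 1 \<and> q = p ^ e \<and> of_nat p = (0::'a))
     \<and> nonarch_abs av \<and> av_complete av \<and> alg_closed TYPE('a) \<and> av \<theta> > 1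
     \<and> (\<forall>x. \<forall>e>0. \<exists>y\<in>kbar q \<theta>. av (x - y) < e)"

text \<open>Inverse q-Frobenius c \<mapsto> c^(1/q) (bijective on C_infinity).\<close>
definition frob_inv :: "nat \<Rightarrow> 'a::field \<Rightarrow> 'a" where
  "frob_inv q x = (THE y. y ^ q = x)"

text \<open>Coefficient of tau^i in rho_t for 1 \<le> i \<le> r (kappa_r = 1).\<close>
definition rho_coeff :: "nat \<Rightarrow> (nat \<Rightarrow> 'a::field) \<Rightarrow> nat \<Rightarrow> 'a" where
  "rho_coeff r \<kappa> i = (if i = r then 1 else \<kappa> i)"

text \<open>Coefficients alpha_n of exp_rho, determined by exp(theta z) = rho_t(exp z):
  alpha_n (theta^(q^n) - theta) = sum_{i=1}^{min n r} kappa_i alpha_{n-i}^(q^i).\<close>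
function exp_coeff :: "nat \<Rightarrow> 'a::field \<Rightarrow> nat \<Rightarrow> (nat \<Rightarrow> 'a) \<Rightarrow> nat \<Rightarrow> 'a" where
  "exp_coeff q \<theta> r \<kappa> 0 = 1"
| "exp_coeff q \<theta> r \<kappa> (Suc n) =
     (\<Sum>i\<in>{1..min (Suc n) r}. rho_coeff r \<kappa> i * (exp_coeff q \<theta> r \<kappa> (Suc n - i)) ^ (q ^ i))
       / (\<theta> ^ (q ^ Suc n) - \<theta>)"
  by pat_completeness auto
termination
  by (relation "measure (\<lambda>(q, \<theta>, r, \<kappa>, n). n)") auto

definition exp_rho :: "('a::field \<Rightarrow> real) \<Rightarrow> nat \<Rightarrow> 'a \<Rightarrow> nat \<Rightarrow> (nat \<Rightarrow> 'a) \<Rightarrow> 'a \<Rightarrow> 'a" where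
  "exp_rho av q \<theta> r \<kappa> z =
     (THE L. conv_to av (\<lambda>N. \<Sum>i<N. exp_coeff q \<theta> r \<kappa> i * z ^ (q ^ i)) L)"

definition Lambda_rho :: "('a::field \<Rightarrow> real) \<Rightarrow> nat \<Rightarrow> 'a \<Rightarrow> nat \<Rightarrow> (nat \<Rightarrow> 'a) \<Rightarrow> 'a set" where
  "Lambda_rho av q \<theta> r \<kappa> = {z. exp_rho av q \<theta> r \<kappa> z = 0}"

definition End_rho :: "('a::field \<Rightarrow> real) \<Rightarrow> nat \<Rightarrow> 'a \<Rightarrow> nat \<Rightarrow> (nat \<Rightarrow> 'a) \<Rightarrow> 'a set" where
  "End_rho av q \<theta> r \<kappa> = {c. \<forall>l\<in>Lambda_rho av q \<theta> r \<kappa>. c * l \<in> Lambda_rho av q \<theta> r \<kappa>}"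

definition K_rho :: "('a::field \<Rightarrow> real) \<Rightarrow> nat \<Rightarrow> 'a \<Rightarrow> nat \<Rightarrow> (nat \<Rightarrow> 'a) \<Rightarrow> 'a set" where
  "K_rho av q \<theta> r \<kappa> = {a / b | a b. a \<in> End_rho av q \<theta> r \<kappa> \<and> b \<in> End_rho av q \<theta> r \<kappa> \<and> b \<noteq> 0}"

text \<open>kbar(t), as a subset of C_infinity(t) = 'a poly fract.\<close>
definition kbar_t :: "nat \<Rightarrow> 'a::field \<Rightarrow> 'a poly fract set" where
  "kbar_t q \<theta> = {Fract n d | n d. d \<noteq> 0 \<and> set (coeffs n) \<subseteq> kbar q \<theta> \<and> set (coeffs d) \<subseteq> kbar q \<theta>}"

definition regular_at :: "'a::field poly fract \<Rightarrow> 'a \<Rightarrow> bool" where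
  "regular_at x a \<longleftrightarrow> (\<exists>n d. poly d a \<noteq> 0 \<and> x = Fract n d)"

definition eval_at :: "'a::field poly fract \<Rightarrow> 'a \<Rightarrow> 'a" where
  "eval_at x a = (THE v. \<exists>n d. poly d a \<noteq> 0 \<and> x = Fract n d \<and> v = poly n a / poly d a)"

definition twist_inv :: "nat \<Rightarrow> 'a::field poly fract \<Rightarrow> 'a poly fract" where
  "twist_inv q x = (THE y. \<exists>n d. d \<noteq> 0 \<and> x = Fract n d
                        \<and> y = Fract (map_poly (frob_inv q) n) (map_poly (frob_inv q) d))"

text \<open>The matrix Phi_rho (0-based indices).\<close>
definition Phi_rho :: "nat \<Rightarrow> 'a::field \<Rightarrow> nat \<Rightarrow> (nat \<Rightarrow> 'a) \<Rightarrow> 'a poly fract mat" where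
  "Phi_rho q \<theta> r \<kappa> = mat r r (\<lambda>(i, j).
     if i + 1 < r then (if j = i + 1 then 1 else 0)
     else if j = 0 then Fract [:- \<theta>, 1:] 1
     else Fract [: - ((frob_inv q ^^ j) (\<kappa> j)) :] 1)"

end

theory Submission
  imports Defs "Jordan_Normal_Form.Char_Poly" "HOL-Library.Function_Algebras"
begin

text \<open>Away from \<open>\<theta>\<close> the matrix \<open>\<Phi>\<close> is invertible, so the equation \<open>\<Phi> E = E^(-1) \<Phi>\<close> moves
  poles of \<open>E\<close> along Frobenius orbits: a pole \<open>y \<noteq> \<theta>\<close> forces a pole at \<open>y ^ q\<close>, and a pole \<open>y\<close>
  with \<open>y ^ (1/q) \<noteq> \<theta>\<close> forces one at \<open>y ^ (1/q)\<close>. As \<open>E\<close> has finitely many poles while the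
  orbit of \<open>\<theta>\<close> is infinite, \<open>E\<close> is regular at every \<open>\<theta> ^ q ^ n\<close>; this gives (a), and (b)
  follows because the first column of \<open>E^(-1) \<Phi>\<close> is divisible by \<open>t - \<theta>\<close>.

  For (c), all poles of \<open>E\<close> are then Frobenius-periodic, so a power \<open>b\<close> of a twist-invariant
  polynomial with \<open>b(\<theta>) \<noteq> 0\<close> clears all denominators. If \<open>E\<close> has polynomial entries, sending
  its first row \<open>(p\<^sub>j)\<close> to \<open>P = \<Sum>j. p\<^sub>j(\<rho>\<^sub>t) \<tau>^j\<close> gives a twisted polynomial commuting with
  \<open>\<rho>\<^sub>t\<close>; then \<open>P exp\<^sub>\<rho> = exp\<^sub>\<rho> E\<^sub>1\<^sub>1(\<theta>)\<close>, so \<open>E\<^sub>1\<^sub>1(\<theta>) \<in> End(\<rho>)\<close>. Applied to \<open>b E\<close> and to \<open>b\<close>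
  this exhibits \<open>E\<^sub>1\<^sub>1(\<theta>)\<close> as a quotient of two elements of \<open>End(\<rho>)\<close>.\<close>

lemma less_power_nat: "1 < (q::nat) \<Longrightarrow> n < q ^ n"
  using less_exp[of n] power_mono[of 2 q n] by linarith

lemma eventually_le_power_power:
  fixes c K :: real and q :: nat
  assumes "c > 1" "q > 1"
  shows "\<exists>n0. \<forall>n\<ge>n0. K \<le> c ^ (q ^ n)"
proof -
  obtain n0 where n0: "K < c ^ n0" using real_arch_pow[OF assms(1)] by blast
  have "c ^ n0 \<le> c ^ (q ^ n)" if "n \<ge> n0" for n
    using assms less_power_nat[of q n] that by (intro power_increasing) auto
  thus ?thesis using n0 by force
qed

lemma mat_mult_entry_sum:
  assumes "A \<in> carrier_mat n n" "B \<in> carrier_mat n n" "i < n" "j < n"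
  shows "(A * B) $$ (i, j) = (\<Sum>k<n. A $$ (i, k) * B $$ (k, j))"
  using assms by (simp add: scalar_prod_def lessThan_atLeast0)

section \<open>Rational functions: regularity and evaluation\<close>

lemma regular_at_Fract_1: "regular_at (Fract p 1) x"
  unfolding regular_at_def by (intro exI[of _ p] exI[of _ 1]) simp

lemma regular_at_add:
  assumes "regular_at f x" "regular_at g (x::'a::field)"
  shows "regular_at (f + g) x"
proof -
  obtain n d n' d' where "poly d x \<noteq> 0" "f = Fract n d" "poly d' x \<noteq> 0" "g = Fract n' d'"
    using assms unfolding regular_at_def by blast
  moreover from this have "d \<noteq> 0" "d' \<noteq> 0" by auto
  ultimately have "f + g = Fract (n * d' + n' * d) (d * d')" by simp
  with \<open>poly d x \<noteq> 0\<close> \<open>poly d' x \<noteq> 0\<close> show ?thesis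
    unfolding regular_at_def by (metis mult_eq_0_iff poly_mult)
qed

lemma regular_at_mult:
  assumes "regular_at f x" "regular_at g (x::'a::field)"
  shows "regular_at (f * g) x"
proof -
  obtain n d n' d' where "poly d x \<noteq> 0" "f = Fract n d" "poly d' x \<noteq> 0" "g = Fract n' d'"
    using assms unfolding regular_at_def by blast
  moreover from this have "f * g = Fract (n * n') (d * d')" by simp
  ultimately show ?thesis unfolding regular_at_def by (metis mult_eq_0_iff poly_mult)
qed

lemma regular_at_minus: "regular_at f x \<Longrightarrow> regular_at (- f) (x::'a::field)"
  unfolding regular_at_def by (metis minus_fract)

lemma regular_at_diff: "regular_at f x \<Longrightarrow> regular_at g x \<Longrightarrow> regular_at (f - g) (x::'a::field)"
  using regular_at_add[of f x "-g"] regular_at_minus[of g x] by simp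

lemma Fract_sum_1: "Fract (sum f A) 1 = (\<Sum>i\<in>A. Fract (f i) (1::'a::idom))"
proof (induction A rule: infinite_finite_induct)
  case (insert x F)
  thus ?case by (simp add: add_fract flip: insert.IH)
qed (simp_all add: fract_collapse)

lemma regular_at_0: "regular_at 0 (x::'a::field)"
  using regular_at_Fract_1[of 0 x] by (simp add: fract_collapse)

lemma regular_at_sum:
  "(\<And>i. i \<in> A \<Longrightarrow> regular_at (F i) x) \<Longrightarrow> regular_at (sum F A) (x::'a::field)"
  by (induction A rule: infinite_finite_induct) (auto intro: regular_at_add regular_at_0)

lemma regular_at_mult_Fract_inverse:
  assumes "regular_at f x" "poly g (x::'a::field) \<noteq> 0"
  shows "regular_at (f * Fract 1 g) x"
proof -
  obtain n d where "poly d x \<noteq> 0" "f = Fract n d" using assms(1) unfolding regular_at_def by blast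
  moreover from this assms(2) have "f * Fract 1 g = Fract n (d * g)" by auto
  ultimately show ?thesis using assms(2) unfolding regular_at_def by (metis mult_eq_0_iff poly_mult)
qed

lemma finite_not_regular_at: "finite {x::'a::field. \<not> regular_at f x}"
proof -
  obtain n d where f: "f = Fract n d" "d \<noteq> 0" by (cases f) auto
  have "{x. \<not> regular_at f x} \<subseteq> {x. poly d x = 0}"
    using f unfolding regular_at_def by auto
  thus ?thesis using poly_roots_finite[OF f(2)] by (rule finite_subset)
qed

lemma eval_at_Fract: "poly d x \<noteq> 0 \<Longrightarrow> eval_at (Fract n d) x = poly n x / poly d (x::'a::field)"
  unfolding eval_at_def
proof (rule the_equality)
  fix v assume d: "poly d x \<noteq> 0"
    and "\<exists>n' d'. poly d' x \<noteq> 0 \<and> Fract n d = Fract n' d' \<and> v = poly n' x / poly d' x"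
  then obtain n' d' where nd': "poly d' x \<noteq> 0" "Fract n d = Fract n' d'" "v = poly n' x / poly d' x"
    by blast
  have "d \<noteq> 0" "d' \<noteq> 0" using d nd'(1) by auto
  hence "n * d' = n' * d" using nd'(2) by (simp add: eq_fract)
  hence "poly n x * poly d' x = poly n' x * poly d x" by (metis poly_mult)
  thus "v = poly n x / poly d x" using d nd' by (simp add: frac_eq_eq)
qed blast

lemma eval_at_mult_Fract_1:
  assumes "regular_at f (x::'a::field)"
  shows "eval_at (f * Fract p 1) x = eval_at f x * poly p x"
proof -
  obtain n d where "poly d x \<noteq> 0" "f = Fract n d" using assms unfolding regular_at_def by blast
  moreover from this have "f * Fract p 1 = Fract (n * p) d" by auto
  ultimately show ?thesis by (simp add: eval_at_Fract)
qed

text \<open>A representation of minimal denominator degree has no cancellable root, so every root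
  of its denominator is a pole.\<close>

lemma obtain_Fract_poles:
  obtains n d where "d \<noteq> 0" "f = Fract n d" "\<And>y. poly d y = 0 \<Longrightarrow> \<not> regular_at f (y::'a::field)"
proof -
  define P where "P k \<longleftrightarrow> (\<exists>n d. d \<noteq> 0 \<and> degree d = k \<and> f = Fract n d)" for k
  obtain n0 d0 where "f = Fract n0 d0" "d0 \<noteq> 0" by (cases f) auto
  hence "P (degree d0)" unfolding P_def by blast
  then obtain k where k: "P k" "\<And>k'. k' < k \<Longrightarrow> \<not> P k'"
    using exists_least_iff[of P] by blast
  then obtain n d where nd: "d \<noteq> 0" "degree d = k" "f = Fract n d" unfolding P_def by blast
  have "\<not> regular_at f y" if y: "poly d y = 0" for y
  proof
    assume "regular_at f y"
    then obtain n' d' where nd': "poly d' y \<noteq> 0" "f = Fract n' d'" unfolding regular_at_def by blast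
    moreover have "d' \<noteq> 0" using nd'(1) by auto
    ultimately have "n * d' = n' * d" using nd by (simp add: eq_fract)
    hence "poly n y * poly d' y = poly n' y * poly d y" by (metis poly_mult)
    hence "poly n y = 0" using y nd' by simp
    then obtain n1 where n1: "n = [:- y, 1:] * n1" by (metis dvdE poly_eq_0_iff_dvd)
    obtain d1 where d1: "d = [:- y, 1:] * d1" using y by (metis dvdE poly_eq_0_iff_dvd)
    have "d1 \<noteq> 0" using d1 nd by auto
    moreover from this have "degree d1 < k" using nd unfolding d1 by (subst (asm) degree_mult_eq) auto
    moreover have "[:- y, 1:] \<noteq> 0" by simp
    hence "f = Fract n1 d1" using nd(3) unfolding n1 d1 by (metis mult_fract_cancel)
    ultimately show False using k(2) unfolding P_def by blast
  qed
  thus thesis using that nd by blast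
qed

lemma dvd_power_degree_if_roots:
  fixes d w :: "'a::field poly"
  assumes "alg_closed TYPE('a)" "d \<noteq> 0" "\<And>y. poly d y = 0 \<Longrightarrow> poly w y = 0"
  shows "d dvd w ^ degree d"
  using assms(2,3)
proof (induction "degree d" arbitrary: d)
  case 0
  thus ?case by (simp add: is_unit_iff_degree unit_imp_dvd)
next
  case (Suc n)
  obtain y where y: "poly d y = 0" using assms(1) Suc(2) unfolding alg_closed_def
    by (metis zero_less_Suc)
  obtain d1 where d1: "d = [:- y, 1:] * d1" using y by (metis dvdE poly_eq_0_iff_dvd)
  have "d1 \<noteq> 0" using d1 Suc(3) by auto
  hence "degree d1 = n" using Suc(2) unfolding d1 by (subst (asm) degree_mult_eq) auto
  moreover have "d1 dvd w ^ degree d1" using Suc d1 \<open>d1 \<noteq> 0\<close> \<open>degree d1 = n\<close> by auto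
  moreover have "[:- y, 1:] dvd w" using Suc(4) y by (simp add: poly_eq_0_iff_dvd[symmetric])
  ultimately show ?case using d1 Suc(2) by (metis mult_dvd_mono power_Suc)
qed

lemma clear_denominators:
  fixes f :: "'i \<Rightarrow> 'a::field poly fract"
  assumes "alg_closed TYPE('a)" "finite I"
    and "\<And>i y. i \<in> I \<Longrightarrow> \<not> regular_at (f i) y \<Longrightarrow> poly w y = 0"
  obtains M where "\<And>i. i \<in> I \<Longrightarrow> \<exists>n. Fract (w ^ M) 1 * f i = Fract n 1"
proof -
  have "\<exists>n d. d \<noteq> 0 \<and> f i = Fract n d \<and> d dvd w ^ degree d" if "i \<in> I" for i
  proof -
    obtain n d where nd: "d \<noteq> 0" "f i = Fract n d" "\<And>y. poly d y = 0 \<Longrightarrow> \<not> regular_at (f i) y"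
      using obtain_Fract_poles[of "f i"] by blast
    thus ?thesis using assms that by (blast intro: dvd_power_degree_if_roots)
  qed
  then obtain n d where nd: "\<And>i. i \<in> I \<Longrightarrow> d i \<noteq> 0 \<and> f i = Fract (n i) (d i) \<and> d i dvd w ^ degree (d i)"
    by metis
  define M where "M = (\<Sum>i\<in>I. degree (d i))"
  have "\<exists>m. Fract (w ^ M) 1 * f i = Fract m 1" if i: "i \<in> I" for i
  proof -
    have "degree (d i) \<le> M" unfolding M_def using assms(2) i by (intro member_le_sum) auto
    hence "d i dvd w ^ M" using nd[OF i] by (meson dvd_trans le_imp_power_dvd)
    then obtain k where k: "w ^ M = d i * k" by (elim dvdE)
    have "Fract (w ^ M) 1 * f i = Fract (n i * k) 1"
      using nd[OF i] k by (simp add: eq_fract algebra_simps)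
    thus ?thesis by blast
  qed
  thus thesis by (rule that)
qed

section \<open>The field C_infinity\<close>

locale C_infinity =
  fixes av :: "'a::field \<Rightarrow> real" and q :: nat and \<theta> :: 'a
  assumes C_infty: "is_C_infty av q \<theta>"
begin

lemma obtain_CHAR: obtains p e where "prime p" "e \<ge> 1" "q = p ^ e" "CHAR('a) = p"
proof -
  from C_infty obtain p e where pe: "prime p" "e \<ge> 1" "q = p ^ e" "of_nat p = (0::'a)"
    unfolding is_C_infty_def by blast
  have "CHAR('a) dvd p" using pe(4) of_nat_eq_0_iff_char_dvd by blast
  moreover have "CHAR('a) \<noteq> 1" by (metis of_nat_1 of_nat_CHAR one_neq_zero)
  ultimately have "CHAR('a) = p" using pe(1) prime_nat_iff by auto
  thus thesis using that pe by blast
qed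

lemma q_gt_1: "q > 1"
proof -
  obtain p e where "prime p" "e \<ge> 1" "q = p ^ e" by (rule obtain_CHAR)
  thus ?thesis using prime_gt_1_nat[of p] one_less_power[of p e] by simp
qed

lemma alg_closed: "alg_closed TYPE('a)"
  using C_infty unfolding is_C_infty_def by blast

lemma frob_add: "(x + y) ^ q ^ n = x ^ q ^ n + (y::'a) ^ q ^ n"
proof -
  obtain p e where pe: "prime p" "e \<ge> 1" "q = p ^ e" "CHAR('a) = p" by (rule obtain_CHAR)
  hence "q ^ n = CHAR('a) ^ (e * n)" by (simp add: power_mult)
  thus ?thesis by (intro freshmans_dream') (use pe in auto)
qed

lemma frob_sum: "(sum f A) ^ q ^ n = (\<Sum>i\<in>A. (f i :: 'a) ^ q ^ n)"
proof -
  obtain p e where pe: "prime p" "e \<ge> 1" "q = p ^ e" "CHAR('a) = p" by (rule obtain_CHAR)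
  hence "q ^ n = CHAR('a) ^ (e * n)" by (simp add: power_mult)
  thus ?thesis by (intro freshmans_dream_sum') (use pe in auto)
qed

lemma frob_minus: "(- x) ^ q ^ n = - ((x::'a) ^ q ^ n)"
proof -
  have "0 = (x + - x) ^ q ^ n" using q_gt_1 by simp
  thus ?thesis unfolding frob_add by (simp add: eq_neg_iff_add_eq_0 add.commute)
qed

lemma frob_diff: "(x - y) ^ q ^ n = x ^ q ^ n - (y::'a) ^ q ^ n"
  using frob_add[of x "- y" n] frob_minus[of y n] by simp

sublocale frob: field_hom "\<lambda>x::'a. x ^ q"
  using frob_add[where n = 1] q_gt_1 by unfold_locales (auto simp: power_mult_distrib)

lemma frob_surj: "\<exists>y::'a. y ^ q = x"
proof -
  define P where "P = monom (1::'a) q + [:- x:]"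
  have "degree P = q" unfolding P_def using q_gt_1
    by (subst degree_add_eq_left) (auto simp: degree_monom_eq)
  then obtain y where "poly P y = 0" using alg_closed q_gt_1 unfolding alg_closed_def by force
  thus ?thesis unfolding P_def by (auto simp: poly_monom)
qed

lemma frob_inv_pow [simp]: "frob_inv q x ^ q = (x::'a)"
proof -
  have "\<exists>!y. y ^ q = x" using frob_surj frob.eq_iff by metis
  thus ?thesis unfolding frob_inv_def by (rule theI')
qed

lemma frob_inv_eq_iff: "frob_inv q x = y \<longleftrightarrow> x = (y::'a) ^ q"
  by (metis frob_inv_pow frob.eq_iff)

lemma frob_inv_of_pow [simp]: "frob_inv q (y ^ q) = (y::'a)"
  by (simp add: frob_inv_eq_iff)

sublocale frob_inv: field_hom "frob_inv q :: 'a \<Rightarrow> 'a"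
  by unfold_locales (simp_all add: frob_inv_eq_iff frob.hom_add power_mult_distrib)

lemma frob_inv_funpow_pow: "((frob_inv q ^^ j) x) ^ q ^ j = (x::'a)"
proof (induction j arbitrary: x)
  case (Suc j)
  have "((frob_inv q ^^ Suc j) x) ^ q ^ Suc j = (((frob_inv q ^^ j) (frob_inv q x)) ^ q ^ j) ^ q"
    by (simp add: funpow_Suc_right power_mult[symmetric] mult.commute del: funpow.simps)
  also have "\<dots> = x" using Suc by simp
  finally show ?case .
qed simp

lemma funpow_frob_inv_periodic:
  assumes "m < m'" "(frob_inv q ^^ m) y = (frob_inv q ^^ m') (y::'a)"
  shows "y ^ q ^ (m' - m) = y"
proof -
  have "inj (frob_inv q ^^ m :: 'a \<Rightarrow> 'a)" by (rule inj_fn) (rule frob_inv.inj_f)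
  moreover have "(frob_inv q ^^ m) y = (frob_inv q ^^ m) ((frob_inv q ^^ (m' - m)) y)"
    using assms by (metis funpow_add le_add_diff_inverse less_imp_le_nat o_apply)
  ultimately have "(frob_inv q ^^ (m' - m)) y = y" by (metis injD)
  thus ?thesis using frob_inv_funpow_pow[of "m' - m" y] by simp
qed

abbreviation poly_twist :: "'a poly \<Rightarrow> 'a poly" where "poly_twist \<equiv> map_poly (frob_inv q)"
abbreviation poly_frob :: "'a poly \<Rightarrow> 'a poly" where "poly_frob \<equiv> map_poly (\<lambda>x. x ^ q)"

sublocale poly_twist: map_poly_inj_idom_hom "frob_inv q :: 'a \<Rightarrow> 'a" ..
sublocale poly_frob: map_poly_inj_idom_hom "\<lambda>x::'a. x ^ q" ..

lemma poly_frob_poly_twist [simp]: "poly_frob (poly_twist p) = p"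
  by (rule poly_eqI) simp

lemma twist_inv_Fract: "d \<noteq> 0 \<Longrightarrow> twist_inv q (Fract n d) = Fract (poly_twist n) (poly_twist d)"
  unfolding twist_inv_def
proof (rule the_equality)
  fix y assume d: "d \<noteq> 0"
    and "\<exists>n' d'. d' \<noteq> 0 \<and> Fract n d = Fract n' d' \<and> y = Fract (poly_twist n') (poly_twist d')"
  then obtain n' d' where nd': "d' \<noteq> 0" "Fract n d = Fract n' d'"
    "y = Fract (poly_twist n') (poly_twist d')" by blast
  hence "n * d' = n' * d" using d by (simp add: eq_fract)
  hence "poly_twist n * poly_twist d' = poly_twist n' * poly_twist d" by (metis poly_twist.hom_mult)
  thus "y = Fract (poly_twist n) (poly_twist d)" using nd' d by (simp add: eq_fract)
qed blast

lemma twist_inv_Fract_1: "twist_inv q (Fract p 1) = Fract (poly_twist p) 1"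
  using twist_inv_Fract[of 1 p] by simp

lemma twist_inv_mult: "twist_inv q (x * y) = twist_inv q x * twist_inv q (y :: 'a poly fract)"
  by (cases x, cases y) (simp add: twist_inv_Fract poly_twist.hom_mult)

lemma regular_at_twist_inv_iff:
  "regular_at (twist_inv q f) (frob_inv q x) \<longleftrightarrow> regular_at f (x::'a)"
proof
  assume "regular_at f x"
  then obtain n d where nd: "poly d x \<noteq> 0" "f = Fract n d" unfolding regular_at_def by blast
  moreover from this have "d \<noteq> 0" by auto
  ultimately have "twist_inv q f = Fract (poly_twist n) (poly_twist d)" by (simp add: twist_inv_Fract)
  moreover have "poly (poly_twist d) (frob_inv q x) \<noteq> 0" using nd by simp
  ultimately show "regular_at (twist_inv q f) (frob_inv q x)" unfolding regular_at_def by blast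
next
  assume "regular_at (twist_inv q f) (frob_inv q x)"
  then obtain n' d' where nd': "poly d' (frob_inv q x) \<noteq> 0" "twist_inv q f = Fract n' d'"
    unfolding regular_at_def by blast
  obtain n d where f: "f = Fract n d" "d \<noteq> 0" by (cases f) auto
  have "d' \<noteq> 0" using nd' by auto
  hence "poly_twist n * d' = n' * poly_twist d" using nd' f by (simp add: twist_inv_Fract eq_fract)
  hence "n * poly_frob d' = poly_frob n' * d"
    by (metis poly_frob.hom_mult poly_frob_poly_twist)
  hence "f = Fract (poly_frob n') (poly_frob d')" using f \<open>d' \<noteq> 0\<close> by (simp add: eq_fract)
  moreover have "poly (poly_frob d') x \<noteq> 0"
    using nd'(1) frob.poly_map_poly[of d' "frob_inv q x"] by simp
  ultimately show "regular_at f x" unfolding regular_at_def by blast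
qed

lemma nonarch_abs: "nonarch_abs av" using C_infty unfolding is_C_infty_def by blast

lemma av_0 [simp]: "av 0 = 0" using nonarch_abs unfolding nonarch_abs_def by blast
lemma av_pos: "x \<noteq> 0 \<Longrightarrow> av x > 0" using nonarch_abs unfolding nonarch_abs_def by blast
lemma av_nonneg [simp]: "av x \<ge> 0" by (cases "x = 0") (auto dest: av_pos)
lemma av_eq_0_iff [simp]: "av x = 0 \<longleftrightarrow> x = 0" using av_pos by fastforce
lemma av_mult: "av (x * y) = av x * av y" using nonarch_abs unfolding nonarch_abs_def by blast
lemma av_ultra: "av (x + y) \<le> max (av x) (av y)"
  using nonarch_abs unfolding nonarch_abs_def by blast

lemma av_1 [simp]: "av 1 = 1"
proof -
  have "av 1 * av 1 = av 1 * 1" using av_mult[of 1 1] by simp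
  moreover have "av 1 > 0" by (rule av_pos) simp
  ultimately show ?thesis by simp
qed

lemma av_power: "av (x ^ n) = av x ^ n"
  by (induction n) (auto simp: av_mult)

lemma av_minus [simp]: "av (- x) = av x"
proof -
  have "av (-1) ^ 2 = 1" using av_power[of "-1" 2] by simp
  hence "av (-1) = 1" using av_nonneg by (metis power2_eq_1_iff abs_of_nonneg abs_neg_one)
  thus ?thesis using av_mult[of "-1" x] by simp
qed

lemma av_minus_commute: "av (x - y) = av (y - x)"
  by (metis av_minus minus_diff_eq)

lemma av_divide: "av (x / y) = av x / av y"
  by (cases "y = 0") (simp_all add: av_mult[symmetric] nonzero_eq_divide_eq)

lemma av_sum_le: "(\<And>i. i \<in> A \<Longrightarrow> av (f i) \<le> M) \<Longrightarrow> M \<ge> 0 \<Longrightarrow> av (sum f A) \<le> M"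
proof (induction A rule: infinite_finite_induct)
  case (insert x F)
  have "av (f x + sum f F) \<le> max (av (f x)) (av (sum f F))" by (rule av_ultra)
  also have "\<dots> \<le> M" using insert by simp
  finally show ?case using insert(1,2) by simp
qed auto

lemma av_add_eq_left: "av y < av x \<Longrightarrow> av (x + y) = av x"
  using av_ultra[of x y] av_ultra[of "x + y" "- y"] by auto

lemma av_theta: "av \<theta> > 1" using C_infty unfolding is_C_infty_def by blast

lemma av_theta_power_diff: "n \<ge> 1 \<Longrightarrow> av (\<theta> ^ q ^ n - \<theta>) = av \<theta> ^ q ^ n"
proof -
  assume "n \<ge> 1"
  hence "av \<theta> ^ 1 < av \<theta> ^ q ^ n" using av_theta q_gt_1 one_less_power[of q n]
    by (intro power_strict_increasing) auto
  thus ?thesis using av_add_eq_left[of "- \<theta>" "\<theta> ^ q ^ n"] by (simp add: av_power)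
qed

lemma theta_not_periodic: "n \<ge> 1 \<Longrightarrow> \<theta> ^ q ^ n \<noteq> \<theta>"
  using av_theta_power_diff[of n] av_theta by auto

lemma conv_to_unique: "conv_to av s L \<Longrightarrow> conv_to av s L' \<Longrightarrow> L = L'"
proof (rule ccontr)
  assume conv: "conv_to av s L" "conv_to av s L'" and "L \<noteq> L'"
  define e where "e = av (L - L')"
  have "e > 0" using \<open>L \<noteq> L'\<close> av_pos unfolding e_def by auto
  then obtain N where "av (s N - L) < e" "av (s N - L') < e"
    using conv unfolding conv_to_def by (metis max.cobounded1 max.cobounded2)
  moreover have "L - L' = (s N - L') + (- (s N - L))" by simp
  ultimately show False unfolding e_def by (metis av_minus av_ultra max_less_iff_conj not_le)
qed

lemma conv_to_series:
  assumes "\<forall>e>0. \<exists>N. \<forall>n\<ge>N. av (T n) < e"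
  shows "\<exists>L. conv_to av (\<lambda>N. \<Sum>i<N. T i) L"
proof -
  have "av_cauchy av (\<lambda>N. \<Sum>i<N. T i)"
    unfolding av_cauchy_def
  proof (intro allI impI)
    fix e :: real assume "e > 0"
    then obtain N where N: "\<forall>n\<ge>N. av (T n) < e / 2" using assms by (meson half_gt_zero)
    have tail: "av ((\<Sum>i<m. T i) - (\<Sum>i<n. T i)) < e" if "N \<le> n" "n \<le> m" for m n
    proof -
      have "(\<Sum>i<m. T i) - (\<Sum>i<n. T i) = (\<Sum>i\<in>{n..<m}. T i)"
        using that by (metis sum_diff_nat_ivl lessThan_atLeast0 le0)
      also have "av \<dots> \<le> e / 2" using N that \<open>e > 0\<close> by (intro av_sum_le) (auto intro: less_imp_le)
      finally show ?thesis using \<open>e > 0\<close> by simp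
    qed
    show "\<exists>N. \<forall>m\<ge>N. \<forall>n\<ge>N. av ((\<Sum>i<m. T i) - (\<Sum>i<n. T i)) < e"
      using tail av_minus_commute by (metis nle_le)
  qed
  thus ?thesis using C_infty unfolding is_C_infty_def av_complete_def by blast
qed

lemma twist_invariant_poly_vanishing:
  fixes S :: "'a set"
  assumes "finite S" "\<And>y. y \<in> S \<Longrightarrow> \<exists>d\<ge>1. y ^ q ^ d = y"
  obtains w where "poly_twist w = w" "poly w \<theta> \<noteq> 0" "\<And>y. y \<in> S \<Longrightarrow> poly w y = 0"
proof -
  obtain d where d: "\<And>y. y \<in> S \<Longrightarrow> d y \<ge> 1 \<and> y ^ q ^ d y = y" using assms(2) by metis
  define w :: "'a poly" where "w = (\<Prod>y\<in>S. monom 1 (q ^ d y) - [:0, 1:])"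
  have "poly_twist w = w"
    unfolding w_def by (simp add: poly_twist.hom_prod poly_twist.hom_minus one_pCons)
  moreover have "poly w \<theta> \<noteq> 0"
    using assms(1) theta_not_periodic d by (simp add: w_def poly_prod poly_monom)
  moreover have "poly w y = 0" if "y \<in> S" for y
    using assms(1) that d[OF that] by (auto simp: w_def poly_prod poly_monom prod_zero_iff)
  ultimately show thesis using that by blast
qed

text \<open>Since \<open>a ^ q ^ i - b ^ q ^ i = (a - b) ^ q ^ i\<close>, the terms of a twisted polynomial are
  continuous uniformly in \<open>i\<close>.\<close>

lemma conv_to_twisted_polynomial:
  assumes S: "conv_to av S L" and P: "\<And>i. i > D \<Longrightarrow> P i = 0"
  shows "conv_to av (\<lambda>N. \<Sum>i<N. P i * S (N - i) ^ q ^ i) (\<Sum>i\<le>D. P i * L ^ q ^ i)"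
  unfolding conv_to_def
proof (intro allI impI)
  fix e :: real assume "e > 0"
  define K where "K = 1 + (\<Sum>i\<le>D. av (P i))"
  have "K > 0" unfolding K_def by (simp add: add_pos_nonneg sum_nonneg)
  define d where "d = min 1 (e / (2 * K))"
  have d: "d > 0" "d \<le> 1" "K * d < e" using \<open>e > 0\<close> \<open>K > 0\<close> unfolding d_def
    by (auto simp: field_simps min_def)
  obtain M where M: "\<forall>n\<ge>M. av (S n - L) < d" using S d(1) unfolding conv_to_def by blast
  have "av ((\<Sum>i<N. P i * S (N - i) ^ q ^ i) - (\<Sum>i\<le>D. P i * L ^ q ^ i)) < e"
    if N: "N \<ge> M + D + 1" for N
  proof -
    have "(\<Sum>i<N. P i * S (N - i) ^ q ^ i) = (\<Sum>i\<le>D. P i * S (N - i) ^ q ^ i)"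
      using N P by (intro sum.mono_neutral_right) auto
    hence "(\<Sum>i<N. P i * S (N - i) ^ q ^ i) - (\<Sum>i\<le>D. P i * L ^ q ^ i)
        = (\<Sum>i\<le>D. P i * (S (N - i) - L) ^ q ^ i)"
      by (simp add: frob_diff sum_subtractf right_diff_distrib)
    also have "av \<dots> \<le> K * d"
    proof (rule av_sum_le)
      fix i assume i: "i \<in> {..D}"
      have "av (S (N - i) - L) \<le> d" using M N i by (simp add: less_imp_le)
      hence "av (S (N - i) - L) ^ q ^ i \<le> d ^ 1"
        using d q_gt_1 by (intro order.trans[OF power_mono power_decreasing]) auto
      moreover have "av (P i) \<le> (\<Sum>i\<le>D. av (P i))" using i by (intro member_le_sum) auto
      hence "av (P i) \<le> K" unfolding K_def by simp
      ultimately show "av (P i * (S (N - i) - L) ^ q ^ i) \<le> K * d"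
        using d \<open>K > 0\<close> unfolding av_mult av_power by (intro mult_mono) auto
    qed (use \<open>K > 0\<close> d in simp)
    finally show ?thesis using d by simp
  qed
  thus "\<exists>N. \<forall>n\<ge>N. av ((\<Sum>i<n. P i * S (n - i) ^ q ^ i) - (\<Sum>i\<le>D. P i * L ^ q ^ i)) < e"
    by blast
qed

end

section \<open>Twisted power series\<close>

lemma sum_fun_apply: "sum F A n = (\<Sum>j\<in>A. F j n)"
  by (induction A rule: infinite_finite_induct) auto

definition vanishes_above :: "(nat \<Rightarrow> 'a::zero) \<Rightarrow> nat \<Rightarrow> bool" where
  "vanishes_above f D \<longleftrightarrow> (\<forall>n>D. f n = 0)"

lemma vanishes_above_sum:
  "finite A \<Longrightarrow> (\<And>j. j \<in> A \<Longrightarrow> \<exists>D. vanishes_above (F j) D) \<Longrightarrow> \<exists>D. vanishes_above (sum F A) D"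
proof (induction A rule: finite_induct)
  case (insert x A)
  then obtain D1 D2 where "vanishes_above (F x) D1" "vanishes_above (sum F A) D2" by blast
  hence "vanishes_above (sum F (insert x A)) (max D1 D2)"
    using insert(1,2) unfolding vanishes_above_def by simp
  thus ?case by blast
qed (auto simp: vanishes_above_def)

context C_infinity
begin

text \<open>A sequence \<open>f\<close> stands for the series \<open>\<Sum>n. f n \<tau>\<^sup>n\<close> in the twisted ring \<open>C\<^sub>\<infinity>[[\<tau>]]\<close>,
  where \<open>\<tau> c = c\<^sup>q \<tau>\<close>.\<close>

definition tau_mult :: "(nat \<Rightarrow> 'a) \<Rightarrow> (nat \<Rightarrow> 'a) \<Rightarrow> nat \<Rightarrow> 'a" (infixl "\<star>" 70) where
  "f \<star> g = (\<lambda>n. \<Sum>i\<le>n. f i * g (n - i) ^ q ^ i)"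

definition tau_const :: "'a \<Rightarrow> nat \<Rightarrow> 'a" where
  "tau_const c = (\<lambda>n. if n = 0 then c else 0)"

definition tau :: "nat \<Rightarrow> nat \<Rightarrow> 'a" where
  "tau j = (\<lambda>n. if n = j then 1 else 0)"

lemma tau_mult_apply: "(f \<star> g) n = (\<Sum>i\<le>n. f i * g (n - i) ^ q ^ i)"
  unfolding tau_mult_def by simp

lemma zero_power_q_power [simp]: "(0::'a) ^ q ^ i = 0"
  using q_gt_1 by simp

lemma tau_mult_add_left: "(f + g) \<star> h = f \<star> h + g \<star> h"
  by (rule ext) (simp add: tau_mult_apply algebra_simps sum.distrib)

lemma tau_mult_add_right: "f \<star> (g + h) = f \<star> g + f \<star> h"
  by (rule ext) (simp add: tau_mult_apply algebra_simps sum.distrib frob_add)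

lemma tau_mult_zero_left [simp]: "0 \<star> g = 0"
  by (rule ext) (simp add: tau_mult_apply)

lemma tau_mult_zero_right [simp]: "f \<star> 0 = 0"
  by (rule ext) (simp add: tau_mult_apply)

lemma tau_mult_diff_left: "(f - g) \<star> h = f \<star> h - g \<star> h"
  by (rule ext) (simp add: tau_mult_apply algebra_simps sum_subtractf)

lemma tau_mult_diff_right: "f \<star> (g - h) = f \<star> g - f \<star> h"
  by (rule ext) (simp add: tau_mult_apply algebra_simps sum_subtractf frob_diff)

lemma tau_mult_sum_left: "sum F A \<star> g = (\<Sum>j\<in>A. F j \<star> g)"
proof (induction A rule: infinite_finite_induct)
  case (insert x A)
  thus ?case by (simp only: sum.insert[OF insert(1,2)] tau_mult_add_left)
next
  case (infinite A)
  thus ?case by (simp only: sum.infinite[OF infinite] tau_mult_zero_left)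
qed (simp only: sum.empty tau_mult_zero_left)

lemma tau_mult_sum_right: "f \<star> sum F A = (\<Sum>j\<in>A. f \<star> F j)"
proof (induction A rule: infinite_finite_induct)
  case (insert x A)
  thus ?case by (simp only: sum.insert[OF insert(1,2)] tau_mult_add_right)
next
  case (infinite A)
  thus ?case by (simp only: sum.infinite[OF infinite] tau_mult_zero_right)
qed (simp only: sum.empty tau_mult_zero_right)

lemma tau_mult_assoc: "f \<star> g \<star> h = f \<star> (g \<star> h)"
proof (rule ext)
  fix n
  define G where "G a b = f a * g b ^ q ^ a * h (n - a - b) ^ q ^ (a + b)" for a b
  have "(f \<star> g \<star> h) n = (\<Sum>i\<le>n. \<Sum>a\<le>i. G a (i - a))"
    unfolding tau_mult_apply G_def
    by (intro sum.cong refl) (auto simp: sum_distrib_right frob_sum power_mult_distrib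
        power_mult[symmetric] power_add[symmetric] mult.assoc)
  also have "\<dots> = (\<Sum>(a, b)\<in>{(a, b). a + b \<le> n}. G a b)"
    by (rule sum.triangle_reindex_eq[symmetric])
  also have "{(a, b). a + b \<le> n} = Sigma {..n} (\<lambda>a. {..n - a})" by auto
  also have "(\<Sum>(a, b)\<in>Sigma {..n} (\<lambda>a. {..n - a}). G a b) = (\<Sum>a\<le>n. \<Sum>b\<le>n - a. G a b)"
    by (rule sum.Sigma[symmetric]) auto
  also have "\<dots> = (f \<star> (g \<star> h)) n"
    unfolding tau_mult_apply G_def
    by (intro sum.cong refl) (auto simp: sum_distrib_left frob_sum power_mult_distrib
        power_mult[symmetric] power_add[symmetric] mult.assoc add.commute)
  finally show "(f \<star> g \<star> h) n = (f \<star> (g \<star> h)) n" .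
qed

lemma tau_const_mult: "tau_const c \<star> g = (\<lambda>n. c * g n)"
proof (rule ext)
  fix n
  have "(tau_const c \<star> g) n = (\<Sum>i\<in>{0}. tau_const c i * g (n - i) ^ q ^ i)"
    unfolding tau_mult_apply by (intro sum.mono_neutral_right) (auto simp: tau_const_def)
  thus "(tau_const c \<star> g) n = c * g n" by (simp add: tau_const_def)
qed

lemma mult_tau_const: "f \<star> tau_const c = (\<lambda>n. f n * c ^ q ^ n)"
proof (rule ext)
  fix n
  have "(f \<star> tau_const c) n = (\<Sum>i\<in>{n}. f i * tau_const c (n - i) ^ q ^ i)"
    unfolding tau_mult_apply by (intro sum.mono_neutral_right) (auto simp: tau_const_def)
  thus "(f \<star> tau_const c) n = f n * c ^ q ^ n" by (simp add: tau_const_def)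
qed

lemma tau_mult_apply_0: "(f \<star> g) 0 = f 0 * g 0"
  by (simp add: tau_mult_apply)

lemma tau_mult_left: "tau j \<star> g = (\<lambda>n. if j \<le> n then g (n - j) ^ q ^ j else 0)"
proof (rule ext)
  fix n
  have "(tau j \<star> g) n = (\<Sum>i\<in>{j} \<inter> {..n}. tau j i * g (n - i) ^ q ^ i)"
    unfolding tau_mult_apply by (intro sum.mono_neutral_right) (auto simp: tau_def)
  thus "(tau j \<star> g) n = (if j \<le> n then g (n - j) ^ q ^ j else 0)"
    by (cases "j \<le> n") (auto simp: tau_def)
qed

lemma tau_0: "tau 0 = tau_const 1"
  by (rule ext) (simp add: tau_def tau_const_def)

lemma tau_const_1_mult [simp]: "tau_const 1 \<star> g = g"
  by (simp add: tau_const_mult)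

lemma mult_tau_const_1 [simp]: "f \<star> tau_const 1 = f"
  by (simp add: mult_tau_const)

lemma tau_const_mult_tau_const: "tau_const a \<star> tau_const b = tau_const (a * b)"
  unfolding tau_const_mult by (rule ext) (simp add: tau_const_def)

lemma tau_mult_tau: "tau i \<star> tau j = tau (i + j)"
  unfolding tau_mult_left using q_gt_1 by (intro ext) (auto simp: tau_def)

lemma tau_mult_tau_const: "tau j \<star> tau_const c = tau_const (c ^ q ^ j) \<star> tau j"
  unfolding tau_mult_left tau_const_mult by (rule ext) (auto simp: tau_const_def tau_def)

lemma tau_const_add: "tau_const (a + b) = tau_const a + tau_const b"
  by (rule ext) (simp add: tau_const_def)

lemma tau_const_0 [simp]: "tau_const 0 = 0"
  by (rule ext) (simp add: tau_const_def)

lemma vanishes_above_tau_mult: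
  "vanishes_above f a \<Longrightarrow> vanishes_above g b \<Longrightarrow> vanishes_above (f \<star> g) (a + b)"
  unfolding vanishes_above_def tau_mult_apply
proof (intro allI impI sum.neutral ballI)
  fix n i assume "\<forall>n>a. f n = 0" "\<forall>n>b. g n = 0" "a + b < n" "i \<in> {..n}"
  thus "f i * g (n - i) ^ q ^ i = 0" by (cases "a < i") auto
qed

lemma vanishes_above_tau_const: "vanishes_above (tau_const c) 0"
  unfolding vanishes_above_def tau_const_def by simp

lemma vanishes_above_tau: "vanishes_above (tau j) j"
  unfolding vanishes_above_def tau_def by simp

definition tau_power :: "(nat \<Rightarrow> 'a) \<Rightarrow> nat \<Rightarrow> nat \<Rightarrow> 'a" where
  "tau_power f k = ((\<star>) f ^^ k) (tau_const 1)"

lemma tau_power_0 [simp]: "tau_power f 0 = tau_const 1"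
  unfolding tau_power_def by simp

lemma tau_power_Suc: "tau_power f (Suc k) = f \<star> tau_power f k"
  unfolding tau_power_def by simp

lemma tau_power_commute: "tau_power f k \<star> f = f \<star> tau_power f k"
  by (induction k) (simp_all add: tau_power_Suc tau_mult_assoc)

lemma tau_mult_truncated_eval:
  "(\<Sum>n<N. (f \<star> g) n * x ^ q ^ n) = (\<Sum>i<N. f i * (\<Sum>m<N - i. g m * x ^ q ^ m) ^ q ^ i)"
proof -
  define h where "h i m = f i * (g m * x ^ q ^ m) ^ q ^ i" for i m
  have "(\<Sum>i<N. f i * (\<Sum>m<N - i. g m * x ^ q ^ m) ^ q ^ i) = (\<Sum>i<N. \<Sum>m<N - i. h i m)"
    unfolding h_def by (simp add: frob_sum sum_distrib_left)
  also have "\<dots> = (\<Sum>(i, m)\<in>Sigma {..<N} (\<lambda>i. {..<N - i}). h i m)"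
    by (rule sum.Sigma) auto
  also have "Sigma {..<N} (\<lambda>i. {..<N - i}) = {(i, m). i + m < N}" by auto
  also have "(\<Sum>(i, m)\<in>{(i, m). i + m < N}. h i m) = (\<Sum>n<N. \<Sum>i\<le>n. h i (n - i))"
    by (rule sum.triangle_reindex)
  also have "\<dots> = (\<Sum>n<N. (f \<star> g) n * x ^ q ^ n)"
    unfolding tau_mult_apply sum_distrib_right
    by (intro sum.cong refl) (simp add: h_def power_mult_distrib mult.assoc
        power_mult[symmetric] power_add[symmetric])
  finally show ?thesis by simp
qed

end

section \<open>Convergence of the exponential\<close>

locale drinfeld = C_infinity av q \<theta> for av :: "'a::field \<Rightarrow> real" and q \<theta> +
  fixes r :: nat and \<kappa> :: "nat \<Rightarrow> 'a"
  assumes r_pos: "r \<ge> 1"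
begin

abbreviation \<alpha> :: "nat \<Rightarrow> 'a" where "\<alpha> \<equiv> exp_coeff q \<theta> r \<kappa>"

definition rho_coeff_bound :: real where
  "rho_coeff_bound = 1 + (\<Sum>i\<in>{1..r}. av (rho_coeff r \<kappa> i))"

lemma rho_coeff_bound_ge_1: "rho_coeff_bound \<ge> 1"
  unfolding rho_coeff_bound_def by (simp add: sum_nonneg)

lemma exp_coeff_Suc_le:
  assumes "D \<ge> 0" and D: "\<forall>i\<in>{1..min (Suc n) r}. av (\<alpha> (Suc n - i)) \<le> D ^ q ^ (Suc n - i)"
  shows "av (\<alpha> (Suc n)) * av \<theta> ^ q ^ Suc n \<le> rho_coeff_bound * D ^ q ^ Suc n"
proof -
  define S where "S = (\<Sum>i\<in>{1..min (Suc n) r}. rho_coeff r \<kappa> i * \<alpha> (Suc n - i) ^ q ^ i)"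
  have S: "av S \<le> rho_coeff_bound * D ^ q ^ Suc n" unfolding S_def
  proof (rule av_sum_le)
    fix i assume i: "i \<in> {1..min (Suc n) r}"
    have "av (rho_coeff r \<kappa> i) \<le> (\<Sum>i\<in>{1..r}. av (rho_coeff r \<kappa> i))"
      using i by (intro member_le_sum) auto
    hence "av (rho_coeff r \<kappa> i) \<le> rho_coeff_bound" unfolding rho_coeff_bound_def by simp
    moreover have "av (\<alpha> (Suc n - i)) ^ q ^ i \<le> (D ^ q ^ (Suc n - i)) ^ q ^ i"
      using D i by (intro power_mono) auto
    moreover have "(D ^ q ^ (Suc n - i)) ^ q ^ i = D ^ q ^ Suc n"
      using i by (simp add: power_mult[symmetric] power_add[symmetric])
    ultimately show "av (rho_coeff r \<kappa> i * \<alpha> (Suc n - i) ^ q ^ i) \<le> rho_coeff_bound * D ^ q ^ Suc n"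
      using \<open>D \<ge> 0\<close> rho_coeff_bound_ge_1 by (simp add: av_mult av_power mult_mono)
  qed (use \<open>D \<ge> 0\<close> rho_coeff_bound_ge_1 in simp)
  have "\<alpha> (Suc n) = S / (\<theta> ^ q ^ Suc n - \<theta>)" unfolding S_def by simp
  hence "av (\<alpha> (Suc n)) = av S / av \<theta> ^ q ^ Suc n"
    using av_theta_power_diff[of "Suc n"] by (simp only: av_divide)
  moreover have "av \<theta> ^ q ^ Suc n \<noteq> 0" using av_theta by (intro power_not_zero) linarith
  ultimately show ?thesis using S nonzero_eq_divide_eq by metis
qed

lemma exp_coeff_le_power: "\<exists>D\<ge>1. \<forall>n. av (\<alpha> n) \<le> D ^ q ^ n"
proof -
  obtain n0 where n0: "\<forall>n\<ge>n0. rho_coeff_bound \<le> av \<theta> ^ q ^ n"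
    using eventually_le_power_power[OF av_theta q_gt_1] by blast
  define D where "D = 1 + (\<Sum>n\<le>n0. av (\<alpha> n))"
  have "D \<ge> 1" unfolding D_def by (simp add: sum_nonneg)
  have "av (\<alpha> n) \<le> D ^ q ^ n" for n
  proof (induction n rule: less_induct)
    case (less n)
    show ?case
    proof (cases "n \<le> n0")
      case True
      have "av (\<alpha> n) \<le> (\<Sum>n\<le>n0. av (\<alpha> n))" using True by (intro member_le_sum) auto
      also have "\<dots> \<le> D ^ 1" unfolding D_def by simp
      also have "\<dots> \<le> D ^ q ^ n" using \<open>D \<ge> 1\<close> q_gt_1 by (intro power_increasing) auto
      finally show ?thesis .
    next
      case False
      then obtain m where m: "n = Suc m" by (cases n) auto
      have "av (\<alpha> n) * av \<theta> ^ q ^ n \<le> rho_coeff_bound * D ^ q ^ n"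
        unfolding m using \<open>D \<ge> 1\<close> less m by (intro exp_coeff_Suc_le) auto
      also have "\<dots> \<le> av \<theta> ^ q ^ n * D ^ q ^ n"
        using n0 False \<open>D \<ge> 1\<close> by (intro mult_right_mono) auto
      finally show ?thesis using av_theta by (simp add: mult.commute)
    qed
  qed
  thus ?thesis using \<open>D \<ge> 1\<close> by blast
qed

text \<open>Each application of the recursion gains a factor \<open>av \<theta> ^ q ^ n\<close>, half of which absorbs the
  coefficient bound; the other half improves the base of the bound by \<open>sqrt (av \<theta>)\<close>.\<close>

lemma exp_coeff_bound_improve:
  assumes "D > 0" and N: "\<forall>n\<ge>N. av (\<alpha> n) \<le> D ^ q ^ n"
  shows "\<exists>N'. \<forall>n\<ge>N'. av (\<alpha> n) \<le> (D / sqrt (av \<theta>)) ^ q ^ n"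
proof -
  define s where "s = sqrt (av \<theta>)"
  have s: "s > 1" "s * s = av \<theta>" unfolding s_def using av_theta by auto
  obtain n1 where n1: "\<forall>n\<ge>n1. rho_coeff_bound \<le> s ^ q ^ n"
    using eventually_le_power_power[OF s(1) q_gt_1] by blast
  have "av (\<alpha> n) \<le> (D / s) ^ q ^ n" if n: "n \<ge> N + r + n1 + 1" for n
  proof -
    obtain m where m: "n = Suc m" using n by (cases n) auto
    have "av (\<alpha> n) * av \<theta> ^ q ^ n \<le> rho_coeff_bound * D ^ q ^ n"
      unfolding m using N n m \<open>D > 0\<close> by (intro exp_coeff_Suc_le) auto
    also have "\<dots> \<le> s ^ q ^ n * D ^ q ^ n"
      using n1 n \<open>D > 0\<close> by (intro mult_right_mono) auto
    finally have "s ^ q ^ n * (av (\<alpha> n) * s ^ q ^ n) \<le> s ^ q ^ n * D ^ q ^ n"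
      unfolding s(2)[symmetric] power_mult_distrib by (simp add: ac_simps)
    hence "av (\<alpha> n) * s ^ q ^ n \<le> D ^ q ^ n" using s(1) by (simp add: mult_le_cancel_left_pos)
    thus ?thesis using s(1) by (simp add: power_divide pos_le_divide_eq)
  qed
  thus ?thesis unfolding s_def by blast
qed

lemma exp_coeff_decay: "c > 0 \<Longrightarrow> \<exists>N. \<forall>n\<ge>N. av (\<alpha> n) \<le> c ^ q ^ n"
proof -
  assume "c > 0"
  obtain D where D: "D \<ge> 1" "\<forall>n. av (\<alpha> n) \<le> D ^ q ^ n" using exp_coeff_le_power by blast
  have s: "sqrt (av \<theta>) > 1" using av_theta by simp
  have bound: "\<exists>N. \<forall>n\<ge>N. av (\<alpha> n) \<le> (D / sqrt (av \<theta>) ^ k) ^ q ^ n" for k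
  proof (induction k)
    case (Suc k)
    then obtain N where "\<forall>n\<ge>N. av (\<alpha> n) \<le> (D / sqrt (av \<theta>) ^ k) ^ q ^ n" by blast
    from exp_coeff_bound_improve[OF _ this] D s show ?case by (simp add: field_simps)
  qed (use D in auto)
  obtain k where "D / c < sqrt (av \<theta>) ^ k" using real_arch_pow[OF s] by blast
  hence "D / sqrt (av \<theta>) ^ k \<le> c" using \<open>c > 0\<close> s by (simp add: field_simps)
  moreover obtain N where "\<forall>n\<ge>N. av (\<alpha> n) \<le> (D / sqrt (av \<theta>) ^ k) ^ q ^ n" using bound by blast
  moreover have "D / sqrt (av \<theta>) ^ k \<ge> 0" using D(1) s by simp
  ultimately have "av (\<alpha> n) \<le> c ^ q ^ n" if "n \<ge> N" for n
    using that by (meson order.trans power_mono)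
  thus ?thesis by blast
qed

lemma exp_terms_tendsto_0: "\<forall>e>0. \<exists>N. \<forall>n\<ge>N. av (\<alpha> n * z ^ q ^ n) < e"
proof (intro allI impI)
  fix e :: real assume "e > 0"
  define c where "c = 1 / (2 * (av z + 1))"
  have "av z + 1 > 0" by (simp add: add_nonneg_pos)
  hence c: "c > 0" "c * av z \<le> 1 / 2" unfolding c_def by (auto simp: field_simps)
  obtain N1 where N1: "\<forall>n\<ge>N1. av (\<alpha> n) \<le> c ^ q ^ n" using exp_coeff_decay[OF c(1)] by blast
  obtain N2 where N2: "(1 / 2 :: real) ^ N2 < e" using real_arch_pow_inv[OF \<open>e > 0\<close>] by force
  have "av (\<alpha> n * z ^ q ^ n) < e" if n: "n \<ge> max N1 N2" for n
  proof -
    have "av (\<alpha> n * z ^ q ^ n) \<le> c ^ q ^ n * av z ^ q ^ n"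
      using N1 n by (simp add: av_mult av_power mult_right_mono)
    also have "\<dots> = (c * av z) ^ q ^ n" by (simp add: power_mult_distrib)
    also have "\<dots> \<le> (1 / 2) ^ q ^ n" using c by (intro power_mono) auto
    also have "\<dots> \<le> (1 / 2) ^ N2"
      using n less_power_nat[OF q_gt_1, of n] by (intro power_decreasing) auto
    finally show ?thesis using N2 by simp
  qed
  thus "\<exists>N. \<forall>n\<ge>N. av (\<alpha> n * z ^ q ^ n) < e" by blast
qed

lemma exp_rho_conv: "conv_to av (\<lambda>N. \<Sum>i<N. \<alpha> i * z ^ q ^ i) (exp_rho av q \<theta> r \<kappa> z)"
proof -
  obtain L where L: "conv_to av (\<lambda>N. \<Sum>i<N. \<alpha> i * z ^ q ^ i) L"
    using conv_to_series[OF exp_terms_tendsto_0[of z]] by blast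
  hence "exp_rho av q \<theta> r \<kappa> z = L"
    unfolding exp_rho_def using conv_to_unique by blast
  thus ?thesis using L by simp
qed

section \<open>The endomorphism equation and regularity\<close>

definition kappa_root :: "nat \<Rightarrow> 'a" where
  "kappa_root k = (frob_inv q ^^ k) (\<kappa> k)"

definition Phi_last :: "nat \<Rightarrow> 'a poly" where
  "Phi_last j = (if j = 0 then [:- \<theta>, 1:] else [:- kappa_root j:])"

text \<open>Entries of \<open>\<Phi> * E\<close> and \<open>E * \<Phi>\<close> for a companion-type matrix \<open>\<Phi>\<close> with last row \<open>\<phi>\<close>;
  matrices are represented by their entry functions.\<close>

definition Phi_times :: "(nat \<Rightarrow> 'b::comm_ring_1) \<Rightarrow> (nat \<Rightarrow> nat \<Rightarrow> 'b) \<Rightarrow> nat \<Rightarrow> nat \<Rightarrow> 'b" where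
  "Phi_times \<phi> e i j = (if i + 1 < r then e (i + 1) j else \<Sum>k<r. \<phi> k * e k j)"

definition times_Phi :: "(nat \<Rightarrow> 'b::comm_ring_1) \<Rightarrow> (nat \<Rightarrow> nat \<Rightarrow> 'b) \<Rightarrow> nat \<Rightarrow> nat \<Rightarrow> 'b" where
  "times_Phi \<phi> e i j = (if 1 \<le> j then e i (j - 1) else 0) + e i (r - 1) * \<phi> j"

definition twist_entries :: "(nat \<Rightarrow> nat \<Rightarrow> 'a poly fract) \<Rightarrow> nat \<Rightarrow> nat \<Rightarrow> 'a poly fract" where
  "twist_entries e i j = twist_inv q (e i j)"

definition endo_eq :: "(nat \<Rightarrow> nat \<Rightarrow> 'a poly fract) \<Rightarrow> bool" where
  "endo_eq e \<longleftrightarrow> (\<forall>i<r. \<forall>j<r.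
     Phi_times (\<lambda>k. Fract (Phi_last k) 1) e i j = times_Phi (\<lambda>k. Fract (Phi_last k) 1) (twist_entries e) i j)"

lemma Phi_rho_carrier: "Phi_rho q \<theta> r \<kappa> \<in> carrier_mat r r"
  unfolding Phi_rho_def by simp

lemma Phi_rho_entry:
  "i < r \<Longrightarrow> k < r \<Longrightarrow> Phi_rho q \<theta> r \<kappa> $$ (i, k)
     = (if i + 1 < r then (if k = i + 1 then 1 else 0) else Fract (Phi_last k) 1)"
  unfolding Phi_rho_def Phi_last_def kappa_root_def by simp

lemma Phi_rho_mult_entry:
  assumes E: "E \<in> carrier_mat r r" and "i < r" "j < r"
  shows "(Phi_rho q \<theta> r \<kappa> * E) $$ (i, j) = Phi_times (\<lambda>k. Fract (Phi_last k) 1) (\<lambda>i j. E $$ (i, j)) i j"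
proof (cases "i + 1 < r")
  case True
  have "(Phi_rho q \<theta> r \<kappa> * E) $$ (i, j) = (\<Sum>k<r. if k = i + 1 then E $$ (k, j) else 0)"
    unfolding mat_mult_entry_sum[OF Phi_rho_carrier assms]
    using assms True by (intro sum.cong) (auto simp: Phi_rho_entry)
  thus ?thesis using True by (simp add: Phi_times_def)
next
  case False
  thus ?thesis unfolding mat_mult_entry_sum[OF Phi_rho_carrier assms]
    using assms by (auto simp: Phi_rho_entry Phi_times_def intro!: sum.cong)
qed

lemma mult_Phi_rho_entry:
  assumes E: "E \<in> carrier_mat r r" and "i < r" "j < r"
  shows "(E * Phi_rho q \<theta> r \<kappa>) $$ (i, j) = times_Phi (\<lambda>k. Fract (Phi_last k) 1) (\<lambda>i j. E $$ (i, j)) i j"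
proof -
  have "(E * Phi_rho q \<theta> r \<kappa>) $$ (i, j)
      = (\<Sum>k<r. E $$ (i, k) * (if k + 1 < r then (if j = k + 1 then 1 else 0) else Fract (Phi_last j) 1))"
    unfolding mat_mult_entry_sum[OF E Phi_rho_carrier assms(2,3)]
    using assms by (intro sum.cong) (auto simp: Phi_rho_entry)
  also have "{..<r} = insert (r - 1) {..<r - 1}" using r_pos by auto
  also have "(\<Sum>k\<in>insert (r - 1) {..<r - 1}. E $$ (i, k) *
      (if k + 1 < r then (if j = k + 1 then 1 else 0) else Fract (Phi_last j) 1))
      = E $$ (i, r - 1) * Fract (Phi_last j) 1 + (\<Sum>k<r - 1. if k = j - 1 \<and> 1 \<le> j then E $$ (i, k) else 0)"
    using r_pos by (subst sum.insert) (auto intro!: sum.cong)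
  also have "(\<Sum>k<r - 1. if k = j - 1 \<and> 1 \<le> j then E $$ (i, k) else 0) = (if 1 \<le> j then E $$ (i, j - 1) else 0)"
    using assms by (cases "1 \<le> j") (auto simp: sum.delta)
  finally show ?thesis by (simp add: times_Phi_def add.commute)
qed

lemma endo_eq_of_matrix:
  assumes E: "E \<in> carrier_mat r r"
    and end_eq: "Phi_rho q \<theta> r \<kappa> * E = map_mat (twist_inv q) E * Phi_rho q \<theta> r \<kappa>"
  shows "endo_eq (\<lambda>i j. E $$ (i, j))"
  unfolding endo_eq_def
proof (intro allI impI)
  fix i j assume ij: "i < r" "j < r"
  let ?\<phi> = "\<lambda>k. Fract (Phi_last k) 1"
  have "Phi_times ?\<phi> (\<lambda>i j. E $$ (i, j)) i j = (map_mat (twist_inv q) E * Phi_rho q \<theta> r \<kappa>) $$ (i, j)"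
    using Phi_rho_mult_entry[OF E ij] end_eq by simp
  also have "\<dots> = times_Phi ?\<phi> (\<lambda>i j. map_mat (twist_inv q) E $$ (i, j)) i j"
    using E ij by (intro mult_Phi_rho_entry) auto
  also have "\<dots> = times_Phi ?\<phi> (twist_entries (\<lambda>i j. E $$ (i, j))) i j"
    using E ij r_pos by (simp add: times_Phi_def twist_entries_def)
  finally show "Phi_times ?\<phi> (\<lambda>i j. E $$ (i, j)) i j = times_Phi ?\<phi> (twist_entries (\<lambda>i j. E $$ (i, j))) i j" .
qed

definition regular_entries :: "(nat \<Rightarrow> nat \<Rightarrow> 'a poly fract) \<Rightarrow> 'a \<Rightarrow> bool" where
  "regular_entries e y \<longleftrightarrow> (\<forall>i<r. \<forall>j<r. regular_at (e i j) y)"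

lemma finite_not_regular_entries: "finite {y. \<not> regular_entries e y}"
proof -
  have "{y. \<not> regular_entries e y} = (\<Union>i<r. \<Union>j<r. {y. \<not> regular_at (e i j) y})"
    unfolding regular_entries_def by auto
  thus ?thesis by (auto intro!: finite_UN_I finite_not_regular_at)
qed

lemma regular_entries_twist_iff:
  "regular_entries (twist_entries e) (frob_inv q x) \<longleftrightarrow> regular_entries e x"
  unfolding regular_entries_def twist_entries_def by (simp add: regular_at_twist_inv_iff)

lemma Phi_last_0_inverse: "Fract (Phi_last 0) 1 * Fract 1 [:- \<theta>, 1:] = 1"
  by (simp add: Phi_last_def One_fract_def eq_fract)

lemma regular_at_Phi_last: "regular_at (Fract (Phi_last k) 1) y"
  by (rule regular_at_Fract_1)

lemma regular_at_times_Phi: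
  "regular_entries e y \<Longrightarrow> i < r \<Longrightarrow> j < r \<Longrightarrow> regular_at (times_Phi (\<lambda>k. Fract (Phi_last k) 1) e i j) y"
  unfolding times_Phi_def regular_entries_def using r_pos
  by (intro regular_at_add regular_at_mult regular_at_Phi_last) (auto intro: regular_at_0)

lemma regular_at_Phi_times:
  "regular_entries e y \<Longrightarrow> i < r \<Longrightarrow> j < r \<Longrightarrow> regular_at (Phi_times (\<lambda>k. Fract (Phi_last k) 1) e i j) y"
  unfolding Phi_times_def regular_entries_def
  by (auto intro!: regular_at_sum regular_at_mult regular_at_Phi_last)

text \<open>Away from \<open>\<theta>\<close> the matrix \<open>\<Phi>\<close> is invertible, so the equation transports regularity
  between \<open>E\<close> and its twist at the same point.\<close>

lemma regular_entries_of_twist: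
  assumes e: "endo_eq e" and "y \<noteq> \<theta>" and reg: "regular_entries (twist_entries e) y"
  shows "regular_entries e y"
proof -
  let ?\<phi> = "\<lambda>k. Fract (Phi_last k) 1"
  have eq: "Phi_times ?\<phi> e i j = times_Phi ?\<phi> (twist_entries e) i j" if "i < r" "j < r" for i j
    using e that unfolding endo_eq_def by blast
  have lower: "regular_at (e i j) y" if "1 \<le> i" "i < r" "j < r" for i j
    using eq[of "i - 1" j] regular_at_times_Phi[OF reg, of "i - 1" j] that
    by (simp add: Phi_times_def)
  have top: "regular_at (e 0 j) y" if "j < r" for j
  proof -
    have "{..<r} = insert 0 {1..<r}" using r_pos by auto
    hence "?\<phi> 0 * e 0 j = times_Phi ?\<phi> (twist_entries e) (r - 1) j - (\<Sum>k\<in>{1..<r}. ?\<phi> k * e k j)"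
      using eq[of "r - 1" j] that r_pos by (simp add: Phi_times_def eq_diff_eq)
    moreover have "regular_at (times_Phi ?\<phi> (twist_entries e) (r - 1) j - (\<Sum>k\<in>{1..<r}. ?\<phi> k * e k j)) y"
      using regular_at_times_Phi[OF reg] that r_pos lower
      by (intro regular_at_diff regular_at_sum regular_at_mult regular_at_Phi_last) auto
    ultimately have "regular_at (?\<phi> 0 * e 0 j * Fract 1 [:- \<theta>, 1:]) y"
      using \<open>y \<noteq> \<theta>\<close> by (intro regular_at_mult_Fract_inverse) auto
    thus ?thesis using Phi_last_0_inverse by (simp add: ac_simps)
  qed
  show ?thesis unfolding regular_entries_def using lower top by (metis less_one not_le)
qed

lemma twist_regular_entries:
  assumes e: "endo_eq e" and "y \<noteq> \<theta>" and reg: "regular_entries e y"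
  shows "regular_entries (twist_entries e) y"
proof -
  let ?\<phi> = "\<lambda>k. Fract (Phi_last k) 1"
  have eq: "Phi_times ?\<phi> e i j = times_Phi ?\<phi> (twist_entries e) i j" if "i < r" "j < r" for i j
    using e that unfolding endo_eq_def by blast
  have last: "regular_at (twist_entries e i (r - 1)) y" if i: "i < r" for i
  proof -
    have "twist_entries e i (r - 1) * ?\<phi> 0 = Phi_times ?\<phi> e i 0"
      using eq[of i 0] i r_pos by (simp add: times_Phi_def)
    hence "twist_entries e i (r - 1) = Phi_times ?\<phi> e i 0 * Fract 1 [:- \<theta>, 1:]"
      using Phi_last_0_inverse by (metis mult.assoc mult.right_neutral)
    thus ?thesis using regular_at_Phi_times[OF reg i] r_pos \<open>y \<noteq> \<theta>\<close>
      by (simp add: regular_at_mult_Fract_inverse)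
  qed
  have other: "regular_at (twist_entries e i j) y" if i: "i < r" and j: "j + 1 < r" for i j
  proof -
    have "twist_entries e i j = Phi_times ?\<phi> e i (j + 1) - twist_entries e i (r - 1) * ?\<phi> (j + 1)"
      using eq[of i "j + 1"] i j by (simp add: times_Phi_def algebra_simps)
    thus ?thesis using regular_at_Phi_times[OF reg i j] last[OF i]
      by (auto intro!: regular_at_diff regular_at_mult regular_at_Phi_last)
  qed
  show ?thesis unfolding regular_entries_def
  proof (intro allI impI)
    fix i j assume "i < r" "j < r"
    thus "regular_at (twist_entries e i j) y"
    proof (cases "j + 1 < r")
      case False
      hence "j = r - 1" using \<open>j < r\<close> by simp
      thus ?thesis using last \<open>i < r\<close> by simp
    qed (use other \<open>i < r\<close> in simp)
  qed
qed

lemma not_regular_entries_frob: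
  "endo_eq e \<Longrightarrow> \<not> regular_entries e x \<Longrightarrow> x \<noteq> \<theta> \<Longrightarrow> \<not> regular_entries e (x ^ q)"
  using regular_entries_twist_iff[of e "x ^ q"] regular_entries_of_twist[of e x] by auto

lemma not_regular_entries_frob_inv:
  "endo_eq e \<Longrightarrow> \<not> regular_entries e x \<Longrightarrow> frob_inv q x \<noteq> \<theta> \<Longrightarrow> \<not> regular_entries e (frob_inv q x)"
  using regular_entries_twist_iff[of e x] twist_regular_entries[of e "frob_inv q x"] by auto

lemma inj_theta_frob_power: "inj (\<lambda>m. \<theta> ^ q ^ (n + m))"
proof (rule injI)
  have less: "av (\<theta> ^ q ^ (n + m)) < av (\<theta> ^ q ^ (n + m'))" if "m < m'" for m m'
    using av_theta q_gt_1 that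
    by (simp add: av_power power_strict_increasing)
  fix m m' assume "\<theta> ^ q ^ (n + m) = \<theta> ^ q ^ (n + m')"
  thus "m = m'" using less[of m m'] less[of m' m] by (metis linorder_neqE_nat order_less_irrefl)
qed

lemma inj_theta_frob_inv_power: "inj (\<lambda>m. (frob_inv q ^^ m) \<theta>)"
proof (rule injI)
  fix m m' assume eq: "(frob_inv q ^^ m) \<theta> = (frob_inv q ^^ m') \<theta>"
  show "m = m'"
  proof (rule ccontr)
    assume "m \<noteq> m'"
    then consider "m < m'" | "m' < m" by linarith
    thus False
    proof cases
      case 1
      thus False using funpow_frob_inv_periodic[OF 1 eq] theta_not_periodic[of "m' - m"] by simp
    next
      case 2
      thus False using funpow_frob_inv_periodic[OF 2 eq[symmetric]] theta_not_periodic[of "m - m'"] by simp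
    qed
  qed
qed

text \<open>Singular points propagate forwards under \<open>x \<mapsto> x\<^sup>q\<close> and backwards under its inverse unless
  they pass through \<open>\<theta>\<close>, but there are only finitely many of them.\<close>

lemma regular_entries_theta_frob_power:
  assumes e: "endo_eq e"
  shows "regular_entries e (\<theta> ^ q ^ n)"
proof (rule ccontr)
  assume bad: "\<not> regular_entries e (\<theta> ^ q ^ n)"
  obtain g :: "nat \<Rightarrow> 'a" where "inj g" and g: "\<And>m. \<not> regular_entries e (g m)"
  proof (cases "n = 0")
    case False
    have "\<not> regular_entries e (\<theta> ^ q ^ (n + m))" for m
    proof (induction m)
      case (Suc m)
      have "\<theta> ^ q ^ (n + m) \<noteq> \<theta>" using theta_not_periodic[of "n + m"] False by simp
      from not_regular_entries_frob[OF e Suc this] show ?case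
        by (simp add: power_mult[symmetric] mult.commute)
    qed (use bad in simp)
    thus thesis using inj_theta_frob_power[of n] by (intro that[of "\<lambda>m. \<theta> ^ q ^ (n + m)"]) auto
  next
    case True
    have "\<not> regular_entries e ((frob_inv q ^^ m) \<theta>)" for m
    proof (induction m)
      case (Suc m)
      have "(frob_inv q ^^ Suc m) \<theta> \<noteq> \<theta>"
        using funpow_frob_inv_periodic[of 0 "Suc m" \<theta>] theta_not_periodic[of "Suc m"] by auto
      with not_regular_entries_frob_inv[OF e Suc] show ?case by simp
    qed (use bad True in simp)
    thus thesis using inj_theta_frob_inv_power by (intro that[of "\<lambda>m. (frob_inv q ^^ m) \<theta>"])
  qed
  hence "range g \<subseteq> {y. \<not> regular_entries e y}" by auto
  hence "infinite {y. \<not> regular_entries e y}" using range_inj_infinite[OF \<open>inj g\<close>] infinite_super by blast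
  thus False using finite_not_regular_entries by blast
qed

lemma eval_at_first_column:
  assumes e: "endo_eq e" and i: "i \<in> {1..<r}"
  shows "eval_at (e i 0) \<theta> = 0"
proof -
  have "Phi_times (\<lambda>k. Fract (Phi_last k) 1) e (i - 1) 0
      = times_Phi (\<lambda>k. Fract (Phi_last k) 1) (twist_entries e) (i - 1) 0"
    using e i unfolding endo_eq_def by auto
  hence "e i 0 = twist_entries e (i - 1) (r - 1) * Fract [:- \<theta>, 1:] 1"
    using i by (simp add: Phi_times_def times_Phi_def Phi_last_def)
  moreover have "regular_at (twist_entries e (i - 1) (r - 1)) \<theta>"
    using regular_entries_twist_iff[of e "\<theta> ^ q"] regular_entries_theta_frob_power[OF e, of 1] i
    unfolding regular_entries_def by auto
  ultimately show ?thesis by (simp add: eval_at_mult_Fract_1)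
qed

lemma not_regular_entries_periodic:
  assumes e: "endo_eq e" and y: "\<not> regular_entries e y"
  shows "\<exists>d\<ge>1. y ^ q ^ d = y"
proof -
  have "\<not> regular_entries e ((frob_inv q ^^ m) y)" for m
  proof (induction m)
    case (Suc m)
    have "(frob_inv q ^^ m) y \<noteq> \<theta> ^ q ^ 1"
      using Suc regular_entries_theta_frob_power[OF e, of 1] by auto
    hence "frob_inv q ((frob_inv q ^^ m) y) \<noteq> \<theta>" by (simp add: frob_inv_eq_iff)
    with not_regular_entries_frob_inv[OF e Suc] show ?case by simp
  qed (use y in simp)
  hence "range (\<lambda>m. (frob_inv q ^^ m) y) \<subseteq> {y. \<not> regular_entries e y}" by auto
  hence "\<not> inj (\<lambda>m. (frob_inv q ^^ m) y)"
    using range_inj_infinite finite_not_regular_entries[of e] finite_subset by blast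
  then obtain m m' where "m < m'" "(frob_inv q ^^ m) y = (frob_inv q ^^ m') y"
    unfolding inj_def by (metis linorder_neqE_nat)
  thus ?thesis using funpow_frob_inv_periodic by (intro exI[of _ "m' - m"]) auto
qed

section \<open>The t-motive of the Drinfeld module as twisted polynomials\<close>

definition rho_t :: "nat \<Rightarrow> 'a" where
  "rho_t = (\<lambda>n. if n = 0 then \<theta> else if n \<le> r then rho_coeff r \<kappa> n else 0)"

lemma vanishes_above_tau_power_rho_t: "vanishes_above (tau_power rho_t k) (r * k)"
proof (induction k)
  case (Suc k)
  have "vanishes_above rho_t r" unfolding vanishes_above_def rho_t_def by simp
  from vanishes_above_tau_mult[OF this Suc] show ?case by (simp add: tau_power_Suc)
qed (simp add: vanishes_above_tau_const)

lemma tau_power_rho_t_0: "tau_power rho_t k 0 = \<theta> ^ k"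
  by (induction k) (simp_all add: tau_power_Suc tau_mult_apply_0 tau_const_def rho_t_def)

lemma tau_const_kappa_mult_tau: "tau_const (\<kappa> i) \<star> tau i = tau i \<star> tau_const (kappa_root i)"
  by (simp add: tau_mult_tau_const kappa_root_def frob_inv_funpow_pow)

lemma rho_t_expand:
  "rho_t = tau_const \<theta> + (\<Sum>i\<in>{1..<r}. tau i \<star> tau_const (kappa_root i)) + tau r"
proof -
  have "(\<Sum>i\<in>{1..<r}. tau i \<star> tau_const (kappa_root i)) = (\<Sum>i\<in>{1..<r}. tau_const (\<kappa> i) \<star> tau i)"
    by (simp add: tau_const_kappa_mult_tau)
  moreover have "(\<Sum>i\<in>{1..<r}. tau_const (\<kappa> i) \<star> tau i) n = (if n \<in> {1..<r} then \<kappa> n else 0)" for n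
    by (simp add: sum_fun_apply tau_const_mult tau_def if_distrib sum.delta' cong: if_cong)
  ultimately show ?thesis
    using r_pos by (auto simp: fun_eq_iff rho_t_def tau_const_def tau_def rho_coeff_def)
qed

text \<open>A polynomial \<open>p\<close> in column \<open>j\<close> of a row vector over \<open>C\<^sub>\<infinity>[t]\<close> corresponds to the twisted
  polynomial \<open>\<Sum>k. \<rho>\<^sub>t\<^sup>k \<tau>\<^sup>j c\<^sub>k\<close>, where \<open>c\<^sub>k\<close> are the coefficients of \<open>p\<close>.\<close>

definition motive_tau :: "nat \<Rightarrow> 'a poly \<Rightarrow> nat \<Rightarrow> 'a" where
  "motive_tau j p = (\<Sum>k\<le>degree p. tau_power rho_t k \<star> (tau j \<star> tau_const (coeff p k)))"

definition row_tau :: "(nat \<Rightarrow> 'a poly) \<Rightarrow> nat \<Rightarrow> 'a" where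
  "row_tau v = (\<Sum>j<r. motive_tau j (v j))"

lemma motive_tau_eq_sum:
  "degree p \<le> N \<Longrightarrow> motive_tau j p = (\<Sum>k\<le>N. tau_power rho_t k \<star> (tau j \<star> tau_const (coeff p k)))"
  unfolding motive_tau_def by (intro sum.mono_neutral_left) (auto simp: coeff_eq_0)

lemma motive_tau_add: "motive_tau j (p + p') = motive_tau j p + motive_tau j p'"
proof -
  define N where "N = max (degree p) (degree p')"
  have "degree (p + p') \<le> N" "degree p \<le> N" "degree p' \<le> N"
    unfolding N_def by (auto intro: degree_add_le)
  thus ?thesis by (simp add: motive_tau_eq_sum tau_const_add tau_mult_add_right sum.distrib)
qed

lemma motive_tau_0 [simp]: "motive_tau j 0 = 0"
  unfolding motive_tau_def by simp

lemma motive_tau_sum: "motive_tau j (sum F A) = (\<Sum>i\<in>A. motive_tau j (F i))"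
  by (induction A rule: infinite_finite_induct) (simp_all add: motive_tau_add)

lemma motive_tau_minus: "motive_tau j (- p) = - motive_tau j p"
  using motive_tau_add[of j p "- p"] by (simp add: eq_neg_iff_add_eq_0 add.commute)

lemma motive_tau_diff: "motive_tau j (p - p') = motive_tau j p - motive_tau j p'"
  using motive_tau_add[of j p "- p'"] motive_tau_minus[of j p'] by simp

lemma motive_tau_const_mult: "motive_tau j ([:c:] * p) = motive_tau j p \<star> tau_const c"
proof -
  have "motive_tau j ([:c:] * p)
      = (\<Sum>k\<le>degree p. tau_power rho_t k \<star> (tau j \<star> tau_const (c * coeff p k)))"
    by (subst motive_tau_eq_sum[of _ "degree p"]) (simp_all add: degree_smult_le)
  also have "\<dots> = (\<Sum>k\<le>degree p. tau_power rho_t k \<star> (tau j \<star> tau_const (coeff p k)) \<star> tau_const c)"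
    by (intro sum.cong refl) (simp add: tau_mult_assoc tau_const_mult_tau_const mult.commute)
  also have "\<dots> = motive_tau j p \<star> tau_const c" unfolding motive_tau_def by (simp add: tau_mult_sum_left)
  finally show ?thesis .
qed

lemma motive_tau_X_mult: "motive_tau j ([:0, 1:] * p) = rho_t \<star> motive_tau j p"
proof -
  have "[:0, 1:] * p = pCons 0 p" by (simp add: mult_pCons_left)
  hence "motive_tau j ([:0, 1:] * p)
      = (\<Sum>k\<le>Suc (degree p). tau_power rho_t k \<star> (tau j \<star> tau_const (coeff (pCons 0 p) k)))"
    using degree_pCons_le[of 0 p] by (simp only: motive_tau_eq_sum)
  also have "\<dots> = (\<Sum>k\<le>degree p. tau_power rho_t (Suc k) \<star> (tau j \<star> tau_const (coeff p k)))"
    by (subst sum.atMost_Suc_shift) simp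
  also have "\<dots> = rho_t \<star> motive_tau j p"
    unfolding motive_tau_def tau_mult_sum_right by (simp only: tau_power_Suc tau_mult_assoc)
  finally show ?thesis .
qed

lemma motive_tau_linear_mult: "motive_tau j ([:- c, 1:] * p) = rho_t \<star> motive_tau j p - motive_tau j p \<star> tau_const c"
proof -
  have "[:- c, 1:] * p = [:0, 1:] * p - [:c:] * p" by (simp add: algebra_simps)
  thus ?thesis by (simp only: motive_tau_diff motive_tau_X_mult motive_tau_const_mult)
qed

lemma motive_tau_neg_const_mult: "motive_tau j ([:- c:] * p) = - (motive_tau j p \<star> tau_const c)"
proof -
  have "[:- c:] * p = - ([:c:] * p)" by simp
  thus ?thesis by (simp only: motive_tau_minus motive_tau_const_mult)
qed

lemma motive_tau_mult_tau: "motive_tau j p \<star> tau 1 = motive_tau (Suc j) (poly_twist p)"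
proof -
  have "tau (Suc j) \<star> tau_const (frob_inv q c) = tau j \<star> tau_const c \<star> tau 1" for c
  proof -
    have "tau 1 \<star> tau_const (frob_inv q c) = tau_const c \<star> tau 1"
      using tau_mult_tau_const[of 1 "frob_inv q c"] by simp
    moreover have "tau (Suc j) = tau j \<star> tau 1" by (simp add: tau_mult_tau)
    ultimately show ?thesis by (simp only: tau_mult_assoc)
  qed
  moreover have "degree (poly_twist p) \<le> degree p" by simp
  ultimately show ?thesis
    by (simp add: motive_tau_eq_sum[of "poly_twist p" "degree p"] motive_tau_def tau_mult_sum_left
        tau_mult_assoc)
qed

lemma motive_tau_const_mult_eq_sum:
  "motive_tau j ([:a:] * p) = (\<Sum>k\<le>degree p. tau_power rho_t k \<star> (tau j \<star> tau_const (a * coeff p k)))"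
  by (subst motive_tau_eq_sum[of _ "degree p"]) (simp_all add: degree_smult_le)

lemma motive_tau_last: "motive_tau r p = (\<Sum>j<r. motive_tau j (Phi_last j * p))"
proof -
  let ?c = "coeff p"
  have "tau r = rho_t - tau_const \<theta> - (\<Sum>i\<in>{1..<r}. tau i \<star> tau_const (kappa_root i))"
    by (simp add: rho_t_expand)
  hence tau_r: "tau r \<star> tau_const a = rho_t \<star> tau_const a - tau_const (\<theta> * a)
      - (\<Sum>i\<in>{1..<r}. tau i \<star> tau_const (kappa_root i * a))" for a
    by (simp only: tau_mult_diff_left tau_mult_sum_left tau_mult_assoc tau_const_mult_tau_const)
  have X: "(\<Sum>k\<le>degree p. tau_power rho_t k \<star> (rho_t \<star> tau_const (?c k))) = rho_t \<star> motive_tau 0 p"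
    unfolding motive_tau_def tau_mult_sum_right tau_0 tau_const_1_mult
    by (simp only: tau_mult_assoc[symmetric] tau_power_commute)
  have "motive_tau r p = (\<Sum>k\<le>degree p. tau_power rho_t k \<star> (rho_t \<star> tau_const (?c k)))
      - (\<Sum>k\<le>degree p. tau_power rho_t k \<star> (tau 0 \<star> tau_const (\<theta> * ?c k)))
      - (\<Sum>i\<in>{1..<r}. \<Sum>k\<le>degree p. tau_power rho_t k \<star> (tau i \<star> tau_const (kappa_root i * ?c k)))"
    unfolding motive_tau_def tau_r
    by (simp add: tau_mult_diff_right tau_mult_sum_right sum_subtractf tau_0, rule sum.swap)
  also have "\<dots> = motive_tau 0 ([:0, 1:] * p) - motive_tau 0 ([:\<theta>:] * p)
      - (\<Sum>i\<in>{1..<r}. motive_tau i ([:kappa_root i:] * p))"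
    by (simp only: X motive_tau_X_mult motive_tau_const_mult_eq_sum)
  also have "\<dots> = motive_tau 0 ([:- \<theta>, 1:] * p) + (\<Sum>j\<in>{1..<r}. motive_tau j ([:- kappa_root j:] * p))"
  proof -
    have "[:- \<theta>, 1:] * p = [:0, 1:] * p - [:\<theta>:] * p" "[:- c:] * p = - ([:c:] * p)" for c
      by (simp_all add: algebra_simps)
    thus ?thesis by (simp only: motive_tau_add motive_tau_minus sum_negf diff_conv_add_uminus)
  qed
  also have "\<dots> = (\<Sum>j<r. motive_tau j (Phi_last j * p))"
  proof -
    have "{..<r} = insert 0 {1..<r}" using r_pos by auto
    thus ?thesis by (simp only: sum.insert) (auto simp: Phi_last_def intro!: sum.cong)
  qed
  finally show ?thesis .
qed

lemma row_tau_sum: "row_tau (\<lambda>j. \<Sum>k\<in>A. F k j) = (\<Sum>k\<in>A. row_tau (F k))"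
  unfolding row_tau_def by (simp add: motive_tau_sum sum.swap[of _ A])

lemma row_tau_linear_mult: "row_tau (\<lambda>j. [:- c, 1:] * v j) = rho_t \<star> row_tau v - row_tau v \<star> tau_const c"
  unfolding row_tau_def motive_tau_linear_mult
  by (simp add: sum_subtractf tau_mult_sum_right tau_mult_sum_left)

lemma row_tau_neg_const_mult: "row_tau (\<lambda>j. [:- c:] * v j) = - (row_tau v \<star> tau_const c)"
  unfolding row_tau_def motive_tau_neg_const_mult by (simp add: sum_negf tau_mult_sum_left)

lemma row_tau_Phi_last_mult:
  "row_tau (\<lambda>j. \<Sum>k<r. Phi_last k * f k j)
     = rho_t \<star> row_tau (f 0) - row_tau (f 0) \<star> tau_const \<theta>
       - (\<Sum>k\<in>{1..<r}. row_tau (f k) \<star> tau_const (kappa_root k))"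
proof -
  have "{..<r} = insert 0 {1..<r}" using r_pos by auto
  hence "row_tau (\<lambda>j. \<Sum>k<r. Phi_last k * f k j)
      = row_tau (\<lambda>j. [:- \<theta>, 1:] * f 0 j) + (\<Sum>k\<in>{1..<r}. row_tau (\<lambda>j. [:- kappa_root k:] * f k j))"
    by (simp only: row_tau_sum sum.insert) (auto simp: Phi_last_def intro!: sum.cong)
  thus ?thesis by (simp only: row_tau_linear_mult row_tau_neg_const_mult sum_negf diff_conv_add_uminus)
qed

text \<open>Twisting a row and multiplying it by \<open>\<Phi>\<close> corresponds to right multiplication by \<open>\<tau>\<close>.\<close>

lemma row_tau_mult_tau:
  assumes "\<And>j. j < r \<Longrightarrow> u j = (if 1 \<le> j then poly_twist (v (j - 1)) else 0) + poly_twist (v (r - 1)) * Phi_last j"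
  shows "row_tau u = row_tau v \<star> tau 1"
proof -
  define g where "g = poly_twist (v (r - 1))"
  have "row_tau u = (\<Sum>j<r. motive_tau j (if 1 \<le> j then poly_twist (v (j - 1)) else 0))
      + (\<Sum>j<r. motive_tau j (Phi_last j * g))"
    unfolding row_tau_def g_def using assms by (simp add: motive_tau_add sum.distrib mult.commute)
  also have "(\<Sum>j<r. motive_tau j (if 1 \<le> j then poly_twist (v (j - 1)) else 0))
      = (\<Sum>j<r - 1. motive_tau (Suc j) (poly_twist (v j)))"
    using r_pos sum.lessThan_Suc_shift[of "\<lambda>j. motive_tau j (if 1 \<le> j then poly_twist (v (j - 1)) else 0)" "r - 1"]
    by simp
  also have "(\<Sum>j<r. motive_tau j (Phi_last j * g)) = motive_tau r g"
    by (rule motive_tau_last[symmetric])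
  also have "(\<Sum>j<r - 1. motive_tau (Suc j) (poly_twist (v j))) + motive_tau r g
      = (\<Sum>j<r. motive_tau (Suc j) (poly_twist (v j)))"
    using r_pos sum.lessThan_Suc[of "\<lambda>j. motive_tau (Suc j) (poly_twist (v j))" "r - 1"]
    by (simp add: g_def)
  also have "\<dots> = row_tau v \<star> tau 1"
    unfolding row_tau_def tau_mult_sum_left motive_tau_mult_tau ..
  finally show ?thesis .
qed

lemma endo_eq_FractD:
  assumes "endo_eq e" and f: "\<forall>i<r. \<forall>j<r. e i j = Fract (f i j) 1" and "i < r" "j < r"
  shows "Phi_times Phi_last f i j = times_Phi Phi_last (\<lambda>i j. poly_twist (f i j)) i j"
proof -
  have "Fract (Phi_times Phi_last f i j) 1 = Phi_times (\<lambda>k. Fract (Phi_last k) 1) e i j"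
    using f assms(3,4) by (auto simp: Phi_times_def Fract_sum_1 intro!: sum.cong)
  also have "\<dots> = times_Phi (\<lambda>k. Fract (Phi_last k) 1) (twist_entries e) i j"
    using assms unfolding endo_eq_def by blast
  also have "\<dots> = Fract (times_Phi Phi_last (\<lambda>i j. poly_twist (f i j)) i j) 1"
    using f assms(3,4) r_pos
    by (simp add: times_Phi_def twist_entries_def twist_inv_Fract_1 fract_collapse)
  finally show ?thesis by (simp add: eq_fract)
qed

text \<open>For an endomorphism with polynomial entries, the first row is carried to a twisted
  polynomial commuting with \<open>\<rho>\<^sub>t\<close>: row \<open>i\<close> becomes \<open>P \<tau>\<^sup>i\<close>, and the last row of \<open>\<Phi> E\<close> expresses
  \<open>P \<tau>\<^sup>r\<close> through \<open>\<rho>\<^sub>t P\<close>.\<close>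

lemma row_tau_commutes_rho_t:
  assumes e: "endo_eq e" and f: "\<forall>i<r. \<forall>j<r. e i j = Fract (f i j) 1"
  shows "row_tau (f 0) \<star> rho_t = rho_t \<star> row_tau (f 0)"
proof -
  define P where "P = row_tau (f 0)"
  have eq: "Phi_times Phi_last f i j = times_Phi Phi_last (\<lambda>i j. poly_twist (f i j)) i j"
    if "i < r" "j < r" for i j
    using endo_eq_FractD[OF e f that] .
  have rows: "row_tau (f i) = P \<star> tau i" if "i < r" for i
    using that
  proof (induction i)
    case (Suc i)
    have "row_tau (f (Suc i)) = row_tau (f i) \<star> tau 1"
      using eq[of i] Suc.prems by (intro row_tau_mult_tau) (simp add: Phi_times_def times_Phi_def)
    thus ?case using Suc by (simp add: tau_mult_assoc tau_mult_tau)
  qed (simp add: P_def tau_0)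
  have "row_tau (\<lambda>j. \<Sum>k<r. Phi_last k * f k j) = row_tau (f (r - 1)) \<star> tau 1"
    using eq[of "r - 1"] r_pos by (intro row_tau_mult_tau) (simp add: Phi_times_def times_Phi_def)
  also have "\<dots> = P \<star> tau r" using rows[of "r - 1"] r_pos by (simp add: tau_mult_assoc tau_mult_tau)
  finally have last: "P \<star> tau r = rho_t \<star> P - P \<star> tau_const \<theta>
      - (\<Sum>k\<in>{1..<r}. P \<star> (tau k \<star> tau_const (kappa_root k)))"
    by (simp add: row_tau_Phi_last_mult rows tau_mult_assoc flip: P_def)
  have "P \<star> rho_t = P \<star> tau_const \<theta> + (\<Sum>k\<in>{1..<r}. P \<star> (tau k \<star> tau_const (kappa_root k))) + P \<star> tau r"
    by (subst rho_t_expand) (simp add: tau_mult_add_right tau_mult_sum_right)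
  also have "\<dots> = rho_t \<star> P" unfolding last by simp
  finally show ?thesis unfolding P_def .
qed

lemma rho_t_mult_apply:
  "(rho_t \<star> h) n = \<theta> * h n + (if n = 0 then 0 else \<Sum>i\<in>{1..min n r}. rho_coeff r \<kappa> i * h (n - i) ^ q ^ i)"
proof (cases n)
  case (Suc m)
  have "(rho_t \<star> h) n = rho_t 0 * h n + (\<Sum>i\<in>{1..n}. rho_t i * h (n - i) ^ q ^ i)"
    by (simp add: tau_mult_apply atMost_atLeast0 sum.atLeast_Suc_atMost)
  also have "(\<Sum>i\<in>{1..n}. rho_t i * h (n - i) ^ q ^ i) = (\<Sum>i\<in>{1..min n r}. rho_t i * h (n - i) ^ q ^ i)"
    by (rule sum.mono_neutral_right) (auto simp: rho_t_def)
  finally show ?thesis using Suc by (simp add: rho_t_def)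
qed (simp add: tau_mult_apply rho_t_def)

text \<open>The functional equation \<open>exp\<^sub>\<rho>(\<theta> z) = \<rho>\<^sub>t(exp\<^sub>\<rho> z)\<close>, on coefficients.\<close>

lemma exp_coeff_intertwines: "\<alpha> \<star> tau_const \<theta> = rho_t \<star> \<alpha>"
proof (rule ext)
  fix n
  show "(\<alpha> \<star> tau_const \<theta>) n = (rho_t \<star> \<alpha>) n"
  proof (cases n)
    case (Suc m)
    define S where "S = (\<Sum>i\<in>{1..min n r}. rho_coeff r \<kappa> i * \<alpha> (n - i) ^ q ^ i)"
    have "\<theta> ^ q ^ n - \<theta> \<noteq> 0" using theta_not_periodic[of n] Suc by simp
    moreover have "\<alpha> n = S / (\<theta> ^ q ^ n - \<theta>)" unfolding S_def Suc by simp
    ultimately have "\<alpha> n * \<theta> ^ q ^ n = \<theta> * \<alpha> n + S" by (simp add: field_simps)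
    thus ?thesis using Suc by (simp add: mult_tau_const rho_t_mult_apply S_def del: exp_coeff.simps)
  qed (simp add: mult_tau_const rho_t_mult_apply)
qed

lemma intertwiner_eq_0:
  assumes h: "h \<star> tau_const \<theta> = rho_t \<star> h" and "h 0 = 0"
  shows "h = 0"
proof (rule ext)
  fix n
  show "h n = 0 n"
  proof (induction n rule: less_induct)
    case (less n)
    show ?case
    proof (cases n)
      case (Suc m)
      have "h n * \<theta> ^ q ^ n = \<theta> * h n + (\<Sum>i\<in>{1..min n r}. rho_coeff r \<kappa> i * h (n - i) ^ q ^ i)"
        using fun_cong[OF h, of n] Suc by (simp add: mult_tau_const rho_t_mult_apply)
      also have "(\<Sum>i\<in>{1..min n r}. rho_coeff r \<kappa> i * h (n - i) ^ q ^ i) = 0"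
        using less Suc by (intro sum.neutral) auto
      finally have "h n * (\<theta> ^ q ^ n - \<theta>) = 0" by (simp add: algebra_simps)
      thus ?thesis using theta_not_periodic[of n] Suc by simp
    qed (use \<open>h 0 = 0\<close> in simp)
  qed
qed

lemma commutes_rho_t_mult_exp_coeff:
  assumes "P \<star> rho_t = rho_t \<star> P"
  shows "P \<star> \<alpha> = \<alpha> \<star> tau_const (P 0)"
proof -
  have "tau_const (P 0) \<star> tau_const \<theta> = tau_const \<theta> \<star> tau_const (P 0)"
    by (simp add: tau_const_mult_tau_const mult.commute)
  hence "(P \<star> \<alpha> - \<alpha> \<star> tau_const (P 0)) \<star> tau_const \<theta>
      = P \<star> (rho_t \<star> \<alpha>) - \<alpha> \<star> (tau_const \<theta> \<star> tau_const (P 0))"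
    by (simp only: tau_mult_diff_left tau_mult_assoc exp_coeff_intertwines)
  also have "\<dots> = rho_t \<star> (P \<star> \<alpha> - \<alpha> \<star> tau_const (P 0))"
    by (simp only: tau_mult_assoc[symmetric] assms exp_coeff_intertwines tau_mult_diff_right)
  finally have "(P \<star> \<alpha> - \<alpha> \<star> tau_const (P 0)) \<star> tau_const \<theta> = rho_t \<star> (P \<star> \<alpha> - \<alpha> \<star> tau_const (P 0))" .
  moreover have "(P \<star> \<alpha> - \<alpha> \<star> tau_const (P 0)) 0 = 0"
    by (simp add: tau_mult_apply_0 tau_const_def)
  ultimately have "P \<star> \<alpha> - \<alpha> \<star> tau_const (P 0) = 0" by (rule intertwiner_eq_0)
  thus ?thesis by simp
qed

lemma exp_rho_mult_eq:
  assumes P: "vanishes_above P D" and eq: "P \<star> \<alpha> = \<alpha> \<star> tau_const c"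
  shows "exp_rho av q \<theta> r \<kappa> (c * z) = (\<Sum>i\<le>D. P i * exp_rho av q \<theta> r \<kappa> z ^ q ^ i)"
proof -
  have "(\<Sum>n<N. \<alpha> n * (c * z) ^ q ^ n) = (\<Sum>i<N. P i * (\<Sum>m<N - i. \<alpha> m * z ^ q ^ m) ^ q ^ i)" for N
  proof -
    have "(\<Sum>n<N. \<alpha> n * (c * z) ^ q ^ n) = (\<Sum>n<N. (P \<star> \<alpha>) n * z ^ q ^ n)"
      unfolding eq mult_tau_const by (simp add: power_mult_distrib mult.assoc)
    thus ?thesis by (simp only: tau_mult_truncated_eval)
  qed
  hence "conv_to av (\<lambda>N. \<Sum>n<N. \<alpha> n * (c * z) ^ q ^ n) (\<Sum>i\<le>D. P i * exp_rho av q \<theta> r \<kappa> z ^ q ^ i)"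
    using conv_to_twisted_polynomial[OF exp_rho_conv[of z], of D P] P
    unfolding vanishes_above_def by simp
  thus ?thesis using exp_rho_conv[of "c * z"] conv_to_unique by blast
qed

lemma End_rho_of_commuting:
  assumes "vanishes_above P D" "P \<star> rho_t = rho_t \<star> P"
  shows "P 0 \<in> End_rho av q \<theta> r \<kappa>"
  unfolding End_rho_def Lambda_rho_def
  using exp_rho_mult_eq[OF assms(1) commutes_rho_t_mult_exp_coeff[OF assms(2)]] by simp

lemma row_tau_apply_0: "row_tau v 0 = poly (v 0) \<theta>"
proof -
  have "motive_tau j p 0 = (if j = 0 then poly p \<theta> else 0)" for j p
    unfolding motive_tau_def sum_fun_apply
    by (simp add: tau_mult_apply_0 tau_power_rho_t_0 tau_mult_left tau_const_def poly_altdef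
        mult.commute cong: if_cong)
  thus ?thesis using r_pos by (simp add: row_tau_def sum_fun_apply sum.delta)
qed

lemma vanishes_above_row_tau: "\<exists>D. vanishes_above (row_tau v) D"
proof -
  have "vanishes_above (tau_power rho_t k \<star> (tau j \<star> tau_const c)) (r * k + (j + 0))" for j k c
    by (intro vanishes_above_tau_mult vanishes_above_tau_power_rho_t vanishes_above_tau
        vanishes_above_tau_const)
  hence "\<exists>D. vanishes_above (motive_tau j p) D" for j p
    unfolding motive_tau_def by (intro vanishes_above_sum) auto
  thus ?thesis unfolding row_tau_def by (intro vanishes_above_sum) auto
qed

lemma poly_entry_End_rho:
  assumes "endo_eq e" "\<forall>i<r. \<forall>j<r. e i j = Fract (f i j) 1"
  shows "poly (f 0 0) \<theta> \<in> End_rho av q \<theta> r \<kappa>"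
  using End_rho_of_commuting[OF _ row_tau_commutes_rho_t[OF assms]] vanishes_above_row_tau
  by (metis row_tau_apply_0)

section \<open>The corner entry at \<theta>\<close>

lemma endo_eq_scale:
  assumes "endo_eq e" "twist_inv q c = c"
  shows "endo_eq (\<lambda>i j. c * e i j)"
  unfolding endo_eq_def
proof (intro allI impI)
  fix i j assume "i < r" "j < r"
  let ?\<phi> = "\<lambda>k. Fract (Phi_last k) 1"
  have "Phi_times ?\<phi> (\<lambda>i j. c * e i j) i j = c * Phi_times ?\<phi> e i j"
    by (simp add: Phi_times_def sum_distrib_left algebra_simps)
  also have "\<dots> = c * times_Phi ?\<phi> (twist_entries e) i j"
    using assms(1) \<open>i < r\<close> \<open>j < r\<close> unfolding endo_eq_def by simp
  also have "\<dots> = times_Phi ?\<phi> (twist_entries (\<lambda>i j. c * e i j)) i j"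
    using assms(2) by (simp add: times_Phi_def twist_entries_def twist_inv_mult algebra_simps)
  finally show "Phi_times ?\<phi> (\<lambda>i j. c * e i j) i j = times_Phi ?\<phi> (twist_entries (\<lambda>i j. c * e i j)) i j" .
qed

lemma endo_eq_1: "endo_eq (\<lambda>i j. if i = j then 1 else 0)"
proof -
  have "twist_inv q 1 = (1 :: 'a poly fract)" "twist_inv q 0 = (0 :: 'a poly fract)"
    using twist_inv_Fract_1[of 1] twist_inv_Fract_1[of 0] by (simp_all add: One_fract_def Zero_fract_def)
  hence "map_mat (twist_inv q) (1\<^sub>m r) = (1\<^sub>m r :: 'a poly fract mat)"
    by (intro eq_matI) auto
  hence "endo_eq (\<lambda>i j. 1\<^sub>m r $$ (i, j))"
    using Phi_rho_carrier by (intro endo_eq_of_matrix) auto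
  moreover have "endo_eq (\<lambda>i j. 1\<^sub>m r $$ (i, j)) = endo_eq (\<lambda>i j. if i = j then 1 else 0)"
    unfolding endo_eq_def Phi_times_def times_Phi_def twist_entries_def using r_pos
    by (intro iff_allI imp_cong refl arg_cong2[where f = "(=)"]) (auto intro!: sum.cong)
  ultimately show ?thesis by simp
qed

lemma twist_invariant_poly_in_End_rho:
  assumes "poly_twist b = b"
  shows "poly b \<theta> \<in> End_rho av q \<theta> r \<kappa>"
proof -
  have "twist_inv q (Fract b 1) = Fract b 1" by (simp add: twist_inv_Fract_1 assms)
  from poly_entry_End_rho[OF endo_eq_scale[OF endo_eq_1 this], of "\<lambda>i j. if i = j then b else 0"]
  show ?thesis by (simp add: fract_collapse)
qed

lemma eval_at_corner_in_K_rho: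
  assumes e: "endo_eq e"
  shows "eval_at (e 0 0) \<theta> \<in> K_rho av q \<theta> r \<kappa>"
proof -
  obtain w where w: "poly_twist w = w" "poly w \<theta> \<noteq> 0" "\<And>y. \<not> regular_entries e y \<Longrightarrow> poly w y = 0"
  proof (rule twist_invariant_poly_vanishing[of "{y. \<not> regular_entries e y}"])
    show "finite {y. \<not> regular_entries e y}" by (rule finite_not_regular_entries)
    show "\<exists>d\<ge>1. y ^ q ^ d = y" if "y \<in> {y. \<not> regular_entries e y}" for y
      using not_regular_entries_periodic[OF e] that by blast
  qed (use that in auto)
  obtain M where M: "\<And>ij. ij \<in> {..<r} \<times> {..<r} \<Longrightarrow> \<exists>n. Fract (w ^ M) 1 * (case ij of (i, j) \<Rightarrow> e i j) = Fract n 1"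
  proof (rule clear_denominators[OF alg_closed, of "{..<r} \<times> {..<r}" "\<lambda>(i, j). e i j" w])
    show "\<And>ij y. ij \<in> {..<r} \<times> {..<r} \<Longrightarrow> \<not> regular_at (case ij of (i, j) \<Rightarrow> e i j) y \<Longrightarrow> poly w y = 0"
      using w(3) unfolding regular_entries_def by auto
  qed (use that in auto)
  have "\<forall>i<r. \<forall>j<r. \<exists>n. Fract (w ^ M) 1 * e i j = Fract n 1" using M by auto
  then obtain f where f: "\<forall>i<r. \<forall>j<r. Fract (w ^ M) 1 * e i j = Fract (f i j) 1"
    by metis
  have twist: "poly_twist (w ^ M) = w ^ M" by (simp add: poly_twist.hom_power w(1))
  hence "twist_inv q (Fract (w ^ M) 1) = Fract (w ^ M) 1" by (simp add: twist_inv_Fract_1)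
  from poly_entry_End_rho[OF endo_eq_scale[OF e this] f]
  have "poly (f 0 0) \<theta> \<in> End_rho av q \<theta> r \<kappa>" .
  moreover have "poly (w ^ M) \<theta> \<in> End_rho av q \<theta> r \<kappa>"
    using twist by (rule twist_invariant_poly_in_End_rho)
  moreover have "eval_at (e 0 0) \<theta> = poly (f 0 0) \<theta> / poly (w ^ M) \<theta>"
  proof -
    have "eval_at (e 0 0) \<theta> * poly (w ^ M) \<theta> = eval_at (e 0 0 * Fract (w ^ M) 1) \<theta>"
      using regular_entries_theta_frob_power[OF e, of 0] r_pos
      by (simp add: eval_at_mult_Fract_1 regular_entries_def)
    also have "\<dots> = poly (f 0 0) \<theta>" using f r_pos by (simp add: mult.commute eval_at_Fract)
    finally show ?thesis using w(2) by (simp add: field_simps)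
  qed
  moreover have "poly (w ^ M) \<theta> \<noteq> 0" using w(2) by simp
  ultimately show ?thesis unfolding K_rho_def by blast
qed

end

theorem proposition4p1:
  fixes av :: "'a::field \<Rightarrow> real" and q :: nat and \<theta> :: 'a
    and r :: nat and \<kappa> :: "nat \<Rightarrow> 'a" and E :: "'a poly fract mat"
  assumes C: "is_C_infty av q \<theta>"
    and r: "r \<ge> 1"
    and kappa: "\<forall>i\<in>{1..<r}. \<kappa> i \<in> kbar q \<theta>"
    and E_dim: "E \<in> carrier_mat r r"
    and E_ent: "\<forall>i<r. \<forall>j<r. E $$ (i, j) \<in> kbar_t q \<theta>"
    and E_end: "Phi_rho q \<theta> r \<kappa> * E = map_mat (twist_inv q) E * Phi_rho q \<theta> r \<kappa>"
  shows "(\<forall>i<r. \<forall>j<r. \<forall>n. regular_at (E $$ (i, j)) (\<theta> ^ (q ^ n)))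
       \<and> (\<forall>i\<in>{1..<r}. eval_at (E $$ (i, 0)) \<theta> = 0)
       \<and> eval_at (E $$ (0, 0)) \<theta> \<in> K_rho av q \<theta> r \<kappa>"
proof -
  interpret drinfeld av q \<theta> r \<kappa>
    using C r by unfold_locales
  have e: "endo_eq (\<lambda>i j. E $$ (i, j))"
    by (rule endo_eq_of_matrix[OF E_dim E_end])
  show ?thesis
    using regular_entries_theta_frob_power[OF e] eval_at_first_column[OF e]
      eval_at_corner_in_K_rho[OF e]
    unfolding regular_entries_def by auto
qed

end
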